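(* Let $X$ and $Y$ be non-trivial separable Fréchet spaces over the same field $\mathbb{K}\in\{\mathbb{R},\mathbb{C}\}$, let $N\in\mathbb{N}$ with $N\geq 2$, and write $\mathbb{N}_N=\{1,\dots,N\}$. Suppose that $X_0$ is a dense linear subspace of $X$ and that, for each $j\in\mathbb{N}_N$, $(T_j(t))_{t\geq 0}\subseteq L(X,Y)$ is a strongly continuous operator family such that: (a) $\lim_{t\to\infty}T_j(t)x=0$ for all $x\in X_0$ and $j\in\mathbb{N}_N$; (b) there exist $x\in X$, $m\in\mathbb{N}$ and a set $B\subseteq[0,\infty)$ with $\overline{dens}(B)=1$ such that $\lim_{t\to\infty,\,t\in B}p^Y_m(T_j(t)x)=\infty$ for each $j\in\mathbb{N}_N$ (resp. $\lim_{t\to\infty,\,t\in B}\|T_j(t)x\|_Y=\infty$ for each $j\in\mathbb{N}_N$, if $Y$ is a Banach space). Then there exist a dense linear subspace $S$ of $X$ and a number $\sigma>0$ such that for each $\epsilon>0$ and for each pair $x,y\in S$ of distinct points, $$\overline{dens}\Bigl(\bigcap_{j\in\mathbb{N}_N}\{s\geq 0: d_Y(T_j(s)x,T_j(s)y)\geq\sigma\}\Bigr)=1$$ and $$\overline{dens}\Bigl(\bigcap_{j\in\mathbb{N}_N}\{s\geq 0: d_Y(T_j(s)x,T_j(s)y)<\epsilon\}\Bigr)=1.$$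
   Context: The topology of $X$ is induced by a fundamental system $(p_n)_{n\in\mathbb{N}}$ of increasing seminorms and that of $Y$ by a fundamental system $(p_n^Y)_{n\in\mathbb{N}}$ of increasing seminorms. The metric on $Y$ is $d_Y(x,y)=\sum_{n=1}^\infty 2^{-n}\frac{p^Y_n(x-y)}{1+p^Y_n(x-y)}$; if $Y$ is a Banach space, one instead takes $d_Y(x,y)=\|x-y\|_Y$. For a (Lebesgue measurable) set $D\subseteq[0,\infty)$, its upper density is $\overline{dens}(D)=\limsup_{t\to+\infty}\frac{m(D\cap[0,t])}{t}$, where $m$ is Lebesgue measure. *)

theory Defs
  imports "HOL-Analysis.Analysis"
begin

definition seminorm_on :: "('k::real_normed_field \<Rightarrow> 'x::ab_group_add \<Rightarrow> 'x) \<Rightarrow> ('x \<Rightarrow> real) \<Rightarrow> bool" where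
  "seminorm_on sc q \<longleftrightarrow> (\<forall>x. q x \<ge> 0) \<and> (\<forall>x y. q (x + y) \<le> q x + q y)
     \<and> (\<forall>c x. q (sc c x) = norm c * q x)"

text \<open>The metric induced by a fundamental system of seminorms p 0, p 1, ...
  (p 0 plays the role of p_1 in the paper):
  d(x,y) = sum over n>=1 of 2^-n * p_n(x-y) / (1 + p_n(x-y)).\<close>
definition seminorm_metric :: "(nat \<Rightarrow> 'x::ab_group_add \<Rightarrow> real) \<Rightarrow> 'x \<Rightarrow> 'x \<Rightarrow> real" where
  "seminorm_metric p x y = (\<Sum>n. (1/2)^(Suc n) * (p n (x - y) / (1 + p n (x - y))))"

abbreviation seminorm_topology :: "(nat \<Rightarrow> 'x::ab_group_add \<Rightarrow> real) \<Rightarrow> 'x topology" where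
  "seminorm_topology p \<equiv> Metric_space.mtopology UNIV (seminorm_metric p)"

definition frechet_space :: "('k::real_normed_field \<Rightarrow> 'x::ab_group_add \<Rightarrow> 'x) \<Rightarrow> (nat \<Rightarrow> 'x \<Rightarrow> real) \<Rightarrow> bool" where
  "frechet_space sc p \<longleftrightarrow> Vector_Spaces.vector_space sc
     \<and> (\<forall>n. seminorm_on sc (p n))
     \<and> (\<forall>n x. p n x \<le> p (Suc n) x)
     \<and> (\<forall>x. x \<noteq> 0 \<longrightarrow> (\<exists>n. p n x \<noteq> 0))
     \<and> Metric_space.mcomplete UNIV (seminorm_metric p)"

definition upper_density :: "real set \<Rightarrow> ereal" where
  "upper_density D = Limsup at_top (\<lambda>t. ereal (measure lebesgue (D \<inter> {0..t}) / t))"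

end

theory Submission
  imports Defs
begin

text \<open>
  The subspace is spanned by vectors v_k + w_k with v_k in X0 and w_k the sum of the u_i over the
  k-th class of a partition of the naturals into infinite classes; the u_i are built in stages. At
  stage i the vector x of (b) is approximated by some y in X0 and u_i is a small multiple of y. By
  (a) the orbits of the earlier u's are tiny after some time e_i; since y shadows x on
  [0, (i + 1) e_i], the orbits of u_i are tiny there as well, and by (b) they are larger than i on
  B \<inter> [a_i, b_i], where b_i is so large that a_i is negligible and B fills almost all of [0, b_i];
  all these estimates hold off exceptional sets of small measure. For a nonzero combination z of
  the spanning vectors the X0-part dies out by (a). Hence all orbits of z are small on the windows
  [e_i, (i + 1) e_i], while on the windows B \<inter> [a_i, b_i] with i in the class of a nonzero
  coefficient this one term dominates; both kinds of windows fill a proportion of [0, t] tending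
  to 1 for suitable t.
\<close>

lemma sum_half_powers_le: "(\<Sum>i\<in>{M..<K}. (1/2::real)^(Suc i)) \<le> (1/2)^M"
proof (cases "M \<le> K")
  case True
  then have "(\<Sum>i\<in>{M..<K}. (1/2::real)^(Suc i)) = (1/2)^M - (1/2)^K"
    by (induct K rule: dec_induct) (simp_all add: sum.atLeastLessThan_Suc)
  then show ?thesis by simp
qed simp

lemma exists_small_factor:
  fixes a b \<delta> :: real
  assumes "0 \<le> a" "0 \<le> b" "0 < \<delta>"
  shows "\<exists>c>0. c \<le> 1 \<and> c * a \<le> \<delta> \<and> c * b \<le> \<delta>"
proof -
  define c where "c = min 1 (\<delta> / (a + b + 1))"
  have c: "0 < c" "c \<le> 1"
    using assms by (auto simp: c_def)
  have "c * (a + b + 1) \<le> \<delta>"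
    using assms pos_le_divide_eq[of "a + b + 1" c \<delta>] by (simp add: c_def)
  then show ?thesis
    using c assms by (intro exI[of _ c]) (auto intro: order_trans[rotated] mult_left_mono)
qed

lemma (in module) span_range_explicit:
  assumes "x \<in> span (range g)"
  shows "\<exists>K r. finite K \<and> x = (\<Sum>k\<in>K. scale (r k) (g k))"
proof -
  obtain t r where t: "finite t" "t \<subseteq> range g" and x: "x = (\<Sum>a\<in>t. scale (r a) a)"
    using assms unfolding span_explicit by blast
  define \<kappa> where "\<kappa> = inv_into UNIV g"
  have "inj_on \<kappa> t"
    unfolding \<kappa>_def using t(2) by (rule inj_on_inv_into)
  moreover have "g (\<kappa> a) = a" if "a \<in> t" for a
    unfolding \<kappa>_def using t(2) that by (auto intro: f_inv_into_f)
  ultimately have "(\<Sum>k\<in>\<kappa> ` t. scale (r (g k)) (g k)) = (\<Sum>a\<in>t. scale (r a) a)"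
    by (simp add: sum.reindex)
  then show ?thesis
    using t(1) x by (intro exI[of _ "\<kappa> ` t"] exI[of _ "\<lambda>k. r (g k)"]) simp
qed

lemma closed_Collect_ball_in:
  assumes "closed S" "\<And>j. j \<in> J \<Longrightarrow> continuous_on S (g j)" "closed C"
  shows "closed {s\<in>S. \<forall>j\<in>J. g j s \<in> C}"
proof -
  have "closed (S \<inter> g j -` C)" if "j \<in> J" for j
    using continuous_closed_preimage assms that by blast
  moreover have "{s\<in>S. \<forall>j\<in>J. g j s \<in> C} = S \<inter> (\<Inter>j\<in>J. S \<inter> g j -` C)"
    by auto
  ultimately show ?thesis
    using assms(1) by (simp only:) (intro closed_Int closed_INT; blast)
qed

lemma closed_Collect_bex_in:
  assumes "finite J" "closed S" "\<And>j. j \<in> J \<Longrightarrow> continuous_on S (g j)" "closed C"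
  shows "closed {s\<in>S. \<exists>j\<in>J. g j s \<in> C}"
proof -
  have "closed (S \<inter> g j -` C)" if "j \<in> J" for j
    using continuous_closed_preimage assms that by blast
  moreover have "{s\<in>S. \<exists>j\<in>J. g j s \<in> C} = (\<Union>j\<in>J. S \<inter> g j -` C)"
    by auto
  ultimately show ?thesis
    using assms(1) by (simp only:) (intro closed_UN; blast)
qed

section \<open>Metrics induced by a fundamental system of seminorms\<close>

definition sat :: "real \<Rightarrow> real" where
  "sat t = t / (1 + t)"

lemma sat_nonneg: "0 \<le> t \<Longrightarrow> 0 \<le> sat t"
  by (simp add: sat_def)

lemma sat_pos: "0 < t \<Longrightarrow> 0 < sat t"
  by (simp add: sat_def)

lemma sat_less_1: "0 \<le> t \<Longrightarrow> sat t < 1"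
  by (simp add: sat_def)

lemma sat_le_self: "0 \<le> t \<Longrightarrow> sat t \<le> t"
  by (simp add: sat_def divide_le_eq mult_le_cancel_left1)

lemma sat_mono: "0 \<le> s \<Longrightarrow> s \<le> t \<Longrightarrow> sat s \<le> sat t"
  by (simp add: sat_def frac_le divide_le_eq field_simps)

lemma sat_less_imp_less: "0 \<le> s \<Longrightarrow> 0 \<le> t \<Longrightarrow> sat s < sat t \<Longrightarrow> s < t"
  using sat_mono[of t s] by fastforce

lemma sat_add_le: assumes "0 \<le> s" "0 \<le> t" shows "sat (s + t) \<le> sat s + sat t"
proof -
  have "sat (s + t) = s / (1 + s + t) + t / (1 + s + t)"
    using assms by (simp add: sat_def add_divide_distrib add.assoc)
  also have "\<dots> \<le> s / (1 + s) + t / (1 + t)"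
  proof (rule add_mono)
    show "s / (1 + s + t) \<le> s / (1 + s)" "t / (1 + s + t) \<le> t / (1 + t)"
      using assms by (intro divide_left_mono; simp)+
  qed
  finally show ?thesis by (simp add: sat_def)
qed

locale frechet_seminorms =
  fixes sc :: "'k::real_normed_field \<Rightarrow> 'x::ab_group_add \<Rightarrow> 'x"
    and p :: "nat \<Rightarrow> 'x \<Rightarrow> real"
  assumes frechet: "frechet_space sc p"
begin

sublocale vector_space sc
  using frechet by (simp add: frechet_space_def)

lemma seminorm: "seminorm_on sc (p n)"
  using frechet by (simp add: frechet_space_def)

lemma seminorm_nonneg [simp]: "0 \<le> p n x"
  using seminorm[of n] by (simp add: seminorm_on_def)

lemma seminorm_add: "p n (x + y) \<le> p n x + p n y"
  using seminorm[of n] by (simp add: seminorm_on_def)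

lemma seminorm_scale: "p n (sc c x) = norm c * p n x"
  using seminorm[of n] by (simp add: seminorm_on_def)

lemma seminorm_zero [simp]: "p n 0 = 0"
  using seminorm_scale[of n 0 0] by simp

lemma seminorm_minus [simp]: "p n (- x) = p n x"
  using seminorm_scale[of n "-1" x] by simp

lemma seminorm_diff_commute: "p n (x - y) = p n (y - x)"
  by (metis minus_diff_eq seminorm_minus)

lemma seminorm_diff_ge: "p n x - p n y \<le> p n (x - y)"
  using seminorm_add[of n "x - y" y] by simp

lemma seminorm_add_ge: "p n x - p n y \<le> p n (x + y)"
  using seminorm_add[of n "x + y" "- y"] by simp

lemma seminorm_sum_le: "p n (sum f A) \<le> (\<Sum>a\<in>A. p n (f a))"
  by (induct A rule: infinite_finite_induct) (auto intro: order_trans[OF seminorm_add])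

lemma seminorm_combination_le: "p n (\<Sum>a\<in>A. sc (r a) (f a)) \<le> (\<Sum>a\<in>A. norm (r a) * p n (f a))"
  using seminorm_sum_le[of n "\<lambda>a. sc (r a) (f a)" A] by (simp add: seminorm_scale)

lemma seminorm_combination_ge:
  assumes "finite K" "k0 \<in> K"
  shows "norm (r k0) * p n (x k0) - (\<Sum>k\<in>K - {k0}. norm (r k) * p n (x k))
    \<le> p n (\<Sum>k\<in>K. sc (r k) (x k))"
proof -
  have "(\<Sum>k\<in>K. sc (r k) (x k)) = sc (r k0) (x k0) + (\<Sum>k\<in>K - {k0}. sc (r k) (x k))"
    using assms by (rule sum.remove)
  then show ?thesis
    using seminorm_add_ge[of n "sc (r k0) (x k0)" "\<Sum>k\<in>K - {k0}. sc (r k) (x k)"]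
      seminorm_combination_le[of n r x "K - {k0}"]
    by (simp add: seminorm_scale)
qed

lemma seminorm_mono: "n \<le> n' \<Longrightarrow> p n x \<le> p n' x"
  by (induct n' rule: dec_induct) (use frechet in \<open>auto simp: frechet_space_def intro: order_trans\<close>)

lemma seminorms_separating: "x \<noteq> 0 \<Longrightarrow> \<exists>n. p n x \<noteq> 0"
  using frechet by (simp add: frechet_space_def)

abbreviation dp :: "'x \<Rightarrow> 'x \<Rightarrow> real" where
  "dp \<equiv> seminorm_metric p"

lemma summable_sat_seminorms: "summable (\<lambda>n. (1/2::real)^(Suc n) * sat (p n z))"
proof (rule summable_comparison_test[of _ "\<lambda>n. (1/2::real)^(Suc n)"])
  show "\<exists>N. \<forall>n\<ge>N. norm ((1/2::real)^(Suc n) * sat (p n z)) \<le> (1/2)^(Suc n)"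
    using sat_nonneg[of "p _ z"] sat_less_1[of "p _ z"] by (auto intro!: mult_left_le less_imp_le)
qed (simp add: summable_geometric)

lemma dp_eq: "dp x y = (\<Sum>n. (1/2)^(Suc n) * sat (p n (x - y)))"
  by (simp add: seminorm_metric_def sat_def)

lemma dp_translate: "dp x y = dp (x - y) 0"
  by (simp add: seminorm_metric_def)

lemma dp_nonneg: "0 \<le> dp x y"
  unfolding dp_eq by (rule suminf_nonneg[OF summable_sat_seminorms]) (simp add: sat_nonneg)

lemma dp_commute: "dp x y = dp y x"
  unfolding dp_eq by (simp add: seminorm_diff_commute)

lemma seminorm_le_dp: "(1/2)^(Suc n) * sat (p n (x - y)) \<le> dp x y"
  unfolding dp_eq using sum_le_suminf[OF summable_sat_seminorms, of "{n}"]
  by (simp add: sat_nonneg)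

lemma dp_triangle: "dp x z \<le> dp x y + dp y z"
proof -
  have "dp x z \<le> (\<Sum>n. (1/2)^(Suc n) * sat (p n (x - y)) + (1/2)^(Suc n) * sat (p n (y - z)))"
    unfolding dp_eq
  proof (rule suminf_le)
    fix n
    have "sat (p n (x - z)) \<le> sat (p n (x - y) + p n (y - z))"
      using seminorm_add[of n "x - y" "y - z"] by (intro sat_mono) auto
    also have "\<dots> \<le> sat (p n (x - y)) + sat (p n (y - z))"
      by (rule sat_add_le) auto
    finally show "(1/2::real)^(Suc n) * sat (p n (x - z))
        \<le> (1/2)^(Suc n) * sat (p n (x - y)) + (1/2)^(Suc n) * sat (p n (y - z))"
      by (simp add: distrib_left[symmetric])
  qed (intro summable_add summable_sat_seminorms)+
  also have "\<dots> = dp x y + dp y z"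
    unfolding dp_eq by (intro suminf_add[symmetric] summable_sat_seminorms)
  finally show ?thesis .
qed

lemma dp_eq_0_iff: "dp x y = 0 \<longleftrightarrow> x = y"
proof
  assume "dp x y = 0"
  show "x = y"
  proof (rule ccontr)
    assume "x \<noteq> y"
    then obtain n where "p n (x - y) \<noteq> 0"
      using seminorms_separating[of "x - y"] by auto
    then have "0 < p n (x - y)"
      using seminorm_nonneg[of n "x - y"] by linarith
    then have "0 < (1/2::real)^(Suc n) * sat (p n (x - y))"
      by (simp add: sat_pos)
    with seminorm_le_dp[of n x y] \<open>dp x y = 0\<close> show False by simp
  qed
qed (simp add: dp_eq sat_def)

sublocale dp: Metric_space UNIV dp
  by unfold_locales (auto simp: dp_nonneg dp_commute dp_eq_0_iff intro: dp_triangle)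

lemma seminorm_less_if_dp_less:
  assumes "dp x 0 < (1/2)^(Suc n) * sat e" "0 < e"
  shows "p n x < e"
proof -
  have "(1/2::real)^(Suc n) * sat (p n x) < (1/2)^(Suc n) * sat e"
    using seminorm_le_dp[of n x 0] assms(1) unfolding diff_zero by linarith
  then have "sat (p n x) < sat e"
    by (rule mult_left_less_imp_less) simp
  then show ?thesis
    using assms(2) sat_less_imp_less[of "p n x" e] by simp
qed

lemma dp_le_seminorm: "dp x 0 \<le> p L x + (1/2)^(Suc L)"
proof -
  let ?g = "\<lambda>n. (1/2::real)^(Suc n) * sat (p n x)"
  have tail: "(\<Sum>n. ?g (n + Suc L)) \<le> (1/2)^(Suc L)"
  proof -
    have "(\<Sum>n. ?g (n + Suc L)) \<le> (\<Sum>n. (1/2::real)^(Suc L) * (1/2)^(Suc n))"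
    proof (rule suminf_le)
      fix n
      have "?g (n + Suc L) \<le> (1/2::real)^(Suc (n + Suc L))"
        using sat_less_1[of "p (n + Suc L) x"] by (intro mult_left_le) auto
      also have "\<dots> = (1/2)^(Suc L) * (1/2)^(Suc n)"
        by (simp only: power_add[symmetric]) (simp add: add.commute)
      finally show "?g (n + Suc L) \<le> (1/2::real)^(Suc L) * (1/2)^(Suc n)" .
    qed (intro summable_ignore_initial_segment summable_sat_seminorms
        summable_mult sums_summable[OF power_half_series])+
    then show ?thesis
      using suminf_mult[OF sums_summable[OF power_half_series], of "(1/2::real)^(Suc L)"]
        sums_unique[OF power_half_series, symmetric]
      by simp
  qed
  have head: "sum ?g {..<Suc L} \<le> p L x"
  proof -
    have "sum ?g {..<Suc L} \<le> (\<Sum>n<Suc L. (1/2::real)^(Suc n)) * p L x"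
      unfolding sum_distrib_right
      by (intro sum_mono mult_left_mono)
        (auto intro: order_trans[OF sat_le_self seminorm_mono])
    also have "\<dots> \<le> p L x"
      using sum_half_powers_le[of 0 "Suc L"]
      by (intro mult_left_le_one_le) (simp_all add: atLeast0LessThan sum_nonneg)
    finally show ?thesis .
  qed
  have "dp x 0 = (\<Sum>n. ?g (n + Suc L)) + sum ?g {..<Suc L}"
    unfolding dp_eq using suminf_split_initial_segment[OF summable_sat_seminorms[of x], of "Suc L"] by simp
  then show ?thesis
    using tail head by linarith
qed

lemma tendsto_seminorm_if_limitin:
  assumes "limitin dp.mtopology f l F"
  shows "((\<lambda>x. p n (f x - l)) \<longlongrightarrow> 0) F"
proof (rule tendstoI)
  fix e :: real
  assume "0 < e"
  then have "0 < (1/2::real)^(Suc n) * sat e"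
    by (simp add: sat_pos)
  moreover have "\<forall>\<epsilon>>0. eventually (\<lambda>x. dp (f x) l < \<epsilon>) F"
    using assms by (simp add: dp.limitin_metric)
  ultimately have "eventually (\<lambda>x. dp (f x) l < (1/2)^(Suc n) * sat e) F"
    by blast
  then show "eventually (\<lambda>x. dist (p n (f x - l)) 0 < e) F"
  proof eventually_elim
    case (elim x)
    then have "p n (f x - l) < e"
      using \<open>0 < e\<close> by (intro seminorm_less_if_dp_less) (simp add: dp_translate[symmetric])
    then show ?case by simp
  qed
qed

lemma continuous_map_seminorm: "continuous_map dp.mtopology euclidean (p n)"
proof -
  have "continuous_map dp.mtopology Met_TC.mtopology (p n)"
    unfolding dp.metric_continuous_map[OF Met_TC.Metric_space_axioms]
  proof (intro conjI ballI allI impI)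
    fix a and e :: real
    assume "0 < e"
    show "\<exists>\<delta>>0. \<forall>x. x \<in> UNIV \<and> dp a x < \<delta> \<longrightarrow> dist (p n a) (p n x) < e"
    proof (intro exI conjI allI impI)
      show "0 < (1/2::real)^(Suc n) * sat e"
        using \<open>0 < e\<close> by (simp add: sat_pos)
      fix x
      assume "x \<in> UNIV \<and> dp a x < (1/2)^(Suc n) * sat e"
      then have "p n (a - x) < e"
        using \<open>0 < e\<close> by (intro seminorm_less_if_dp_less) (simp add: dp_translate[symmetric])
      moreover have "\<bar>p n a - p n x\<bar> \<le> p n (a - x)"
        using seminorm_diff_ge[of n a x] seminorm_diff_ge[of n x a] seminorm_diff_commute[of n a x]
        by linarith
      ultimately show "dist (p n a) (p n x) < e"
        by (simp add: dist_real_def)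
    qed
  qed simp
  then show ?thesis by simp
qed

lemma dp_scale_le: assumes "0 \<le> r" "r \<le> 1" shows "dp (sc (of_real r) x) 0 \<le> dp x 0"
  unfolding dp_eq
proof (rule suminf_le)
  fix n
  have "p n (sc (of_real r) x) \<le> p n x"
    using assms by (simp add: seminorm_scale mult_left_le_one_le)
  then show "(1/2::real)^(Suc n) * sat (p n (sc (of_real r) x - 0)) \<le> (1/2)^(Suc n) * sat (p n (x - 0))"
    by (intro mult_left_mono sat_mono) auto
qed (rule summable_sat_seminorms)+

lemma dp_sum_le: "dp (sum f A) 0 \<le> (\<Sum>a\<in>A. dp (f a) 0)"
proof (induct A rule: infinite_finite_induct)
  case (insert a A)
  have "dp (f a + sum f A) 0 \<le> dp (f a + sum f A) (sum f A) + dp (sum f A) 0"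
    by (rule dp_triangle)
  also have "dp (f a + sum f A) (sum f A) = dp (f a) 0"
    by (simp add: dp_translate[of "f a + sum f A"])
  finally show ?case
    using insert by simp
qed (auto simp: dp_eq_0_iff)

lemma continuous_map_dp:
  assumes "continuous_map Z dp.mtopology f" "continuous_map Z dp.mtopology g"
  shows "continuous_map Z euclidean (\<lambda>x. dp (f x) (g x))"
  using continuous_map_mdist[of Z "metric (UNIV, dp)" f g] assms by simp

lemma seminorm_limit_le:
  assumes lim: "limitin dp.mtopology g L sequentially"
    and bound: "\<And>k. k0 \<le> k \<Longrightarrow> p n (g k - g k0) \<le> \<beta>"
  shows "p n (L - g k0) \<le> \<beta>"
proof -
  have "p n (L - g k0) \<le> p n (g k - L) + \<beta>" if "k0 \<le> k" for k
    using seminorm_add[of n "L - g k" "g k - g k0"] seminorm_diff_commute[of n L "g k"] bound[OF that]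
    by simp
  then have "\<exists>k1. \<forall>k\<ge>k1. p n (L - g k0) \<le> p n (g k - L) + \<beta>"
    by blast
  moreover have "(\<lambda>k. p n (g k - L) + \<beta>) \<longlonglongrightarrow> 0 + \<beta>"
    by (intro tendsto_add tendsto_seminorm_if_limitin[OF lim] tendsto_const)
  ultimately have "p n (L - g k0) \<le> 0 + \<beta>"
    by (intro LIMSEQ_le_const)
  then show ?thesis by simp
qed

lemma dp_scale_approximant_le:
  assumes "0 \<le> c" "c \<le> 1" "dp y x < (1/2)^(Suc n)" "c * p (Suc n) x \<le> (1/2)^(Suc (Suc n))"
  shows "dp (sc (of_real c) y) 0 \<le> (1/2)^n"
proof -
  have "dp (sc (of_real c) y) (sc (of_real c) x) = dp (sc (of_real c) (y - x)) 0"
    by (simp add: dp_translate[of "sc (of_real c) y"] scale_right_diff_distrib)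
  also have "\<dots> \<le> dp (y - x) 0"
    using assms(1,2) by (rule dp_scale_le)
  also have "\<dots> < (1/2)^(Suc n)"
    using assms(3) by (simp add: dp_translate[symmetric])
  finally have "dp (sc (of_real c) y) (sc (of_real c) x) < (1/2)^(Suc n)" .
  moreover have "dp (sc (of_real c) x) 0 \<le> c * p (Suc n) x + (1/2)^(Suc (Suc n))"
    using dp_le_seminorm[of "sc (of_real c) x" "Suc n"] assms(1) by (simp add: seminorm_scale)
  ultimately show ?thesis
    using dp_triangle[of "sc (of_real c) y" 0 "sc (of_real c) x"] assms(4) by simp
qed

lemma exists_dense_span_of_translates:
  fixes w :: "nat \<Rightarrow> 'x"
  assumes "separable_space dp.mtopology" "dp.mtopology closure_of X0 = UNIV"
  shows "\<exists>v. range v \<subseteq> X0 \<and> dp.mtopology closure_of span (range (\<lambda>k. v k + w k)) = UNIV"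
proof -
  obtain C where C: "countable C" "dp.mtopology closure_of C = UNIV"
    using assms(1) unfolding separable_space_def by auto
  define c where "c k = from_nat_into C (fst (prod_decode k))" for k
  \<comment> \<open>every point of C occurs as c k for arbitrarily large k\<close>
  have "\<exists>y\<in>X0. dp (c k - w k) y < 1 / (real k + 1)" for k
  proof -
    have "c k - w k \<in> dp.mtopology closure_of X0"
      using assms(2) by simp
    then show ?thesis
      unfolding dp.metric_closure_of by auto
  qed
  then obtain v where v: "\<And>k. v k \<in> X0" "\<And>k. dp (c k - w k) (v k) < 1 / (real k + 1)"
    by metis
  have close: "dp (c k) (v k + w k) < 1 / (real k + 1)" for k
    using v(2)[of k] dp_translate[of "c k" "v k + w k"] dp_translate[of "c k - w k" "v k"]
    by (simp add: algebra_simps)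
  have "x \<in> dp.mtopology closure_of span (range (\<lambda>k. v k + w k))" for x
    unfolding dp.metric_closure_of
  proof (intro CollectI conjI allI impI UNIV_I)
    fix r :: real
    assume "0 < r"
    have "x \<in> dp.mtopology closure_of C"
      using C(2) by simp
    then have "\<forall>r>0. \<exists>y\<in>C. y \<in> dp.mball x r"
      unfolding dp.metric_closure_of by blast
    then obtain a where "a \<in> C" "a \<in> dp.mball x (r/2)"
      using \<open>0 < r\<close> half_gt_zero by blast
    then have a: "a \<in> C" "dp x a < r/2"
      by auto
    obtain n0 :: nat where n0: "inverse (real (Suc n0)) < r/2"
      using reals_Archimedean \<open>0 < r\<close> half_gt_zero by blast
    define k where "k = prod_encode (to_nat_on C a, n0)"
    have "c k = a"
      unfolding c_def k_def using C(1) a(1) by simp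
    moreover have "1 / (real k + 1) \<le> inverse (real (Suc n0))"
      using le_prod_encode_2[of n0 "to_nat_on C a"] unfolding k_def
      by (simp add: inverse_eq_divide frac_le)
    ultimately have "dp a (v k + w k) < r/2"
      using close[of k] n0 by simp
    then have "dp x (v k + w k) < r"
      using a(2) dp_triangle[of x "v k + w k" a] by simp
    moreover have "v k + w k \<in> span (range (\<lambda>k. v k + w k))"
      by (intro span_base) simp
    ultimately show "\<exists>y\<in>span (range (\<lambda>k. v k + w k)). y \<in> dp.mball x r"
      by auto
  qed
  then show ?thesis
    using v(1) by (intro exI[of _ v]) auto
qed

end

section \<open>Upper density and Lebesgue measure\<close>

lemma lmeasurable_if_subset_Icc: "A \<subseteq> {a..b::real} \<Longrightarrow> A \<in> sets lebesgue \<Longrightarrow> A \<in> lmeasurable"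
  by (rule fmeasurableI2[of "{a..b}"]) auto

lemma upper_density_le_1: "upper_density D \<le> 1"
  unfolding upper_density_def
proof (rule Limsup_bounded)
  show "\<forall>\<^sub>F t in at_top. ereal (measure lebesgue (D \<inter> {0..t}) / t) \<le> 1"
    using eventually_gt_at_top[of "0::real"]
  proof eventually_elim
    case (elim t)
    have "measure lebesgue (D \<inter> {0..t}) \<le> t"
    proof (cases "D \<inter> {0..t} \<in> sets lebesgue")
      case True
      then have "measure lebesgue (D \<inter> {0..t}) \<le> measure lebesgue {0..t}"
        by (intro measure_mono_fmeasurable) auto
      then show ?thesis
        using elim by simp
    qed (use elim in \<open>simp add: measure_notin_sets\<close>)
    then show ?case
      using elim by simp
  qed
qed

lemma upper_density_eq_1I:
  assumes "\<And>\<delta> t0. 0 < \<delta> \<Longrightarrow> \<exists>t\<ge>t0. 0 < t \<and> (1 - \<delta>) * t \<le> measure lebesgue (D \<inter> {0..t})"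
  shows "upper_density D = 1"
proof (rule antisym[OF upper_density_le_1])
  let ?g = "\<lambda>t. ereal (measure lebesgue (D \<inter> {0..t}) / t)"
  have close: "ereal (1 - \<delta>) \<le> Limsup at_top ?g" if \<delta>: "0 < \<delta>" for \<delta>
    unfolding Limsup_def
  proof (rule INF_greatest)
    fix P :: "real \<Rightarrow> bool"
    assume "P \<in> {P. eventually P at_top}"
    then obtain t0 where t0: "\<And>t. t \<ge> t0 \<Longrightarrow> P t"
      by (auto simp: eventually_at_top_linorder)
    obtain t where t: "t \<ge> t0" "0 < t" "(1 - \<delta>) * t \<le> measure lebesgue (D \<inter> {0..t})"
      using assms[OF \<delta>, of t0] by blast
    have "ereal (1 - \<delta>) \<le> ?g t"
      using t by (simp add: field_simps)
    also have "\<dots> \<le> (SUP x\<in>Collect P. ?g x)"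
      using t0[OF t(1)] by (intro SUP_upper) auto
    finally show "ereal (1 - \<delta>) \<le> (SUP x\<in>Collect P. ?g x)" .
  qed
  show "1 \<le> upper_density D"
    unfolding upper_density_def
  proof (rule dense_le)
    fix y :: ereal
    assume "y < 1"
    then show "y \<le> Limsup at_top ?g"
    proof (cases y)
      case (real r)
      then show ?thesis
        using close[of "1 - r"] \<open>y < 1\<close> by simp
    qed auto
  qed
qed

lemma upper_density_eq_1D:
  assumes "upper_density D = 1" "0 < \<delta>" "\<delta> < 1"
  shows "\<exists>t\<ge>t0. 0 < t \<and> D \<inter> {0..t} \<in> sets lebesgue \<and> (1 - \<delta>) * t \<le> measure lebesgue (D \<inter> {0..t})"
proof (rule ccontr)
  assume contra: "\<not> ?thesis"
  have "\<forall>\<^sub>F t in at_top. ereal (measure lebesgue (D \<inter> {0..t}) / t) \<le> ereal (1 - \<delta>)"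
    using eventually_ge_at_top[of "max t0 1"]
  proof eventually_elim
    case (elim t)
    have "measure lebesgue (D \<inter> {0..t}) \<le> (1 - \<delta>) * t"
    proof (cases "D \<inter> {0..t} \<in> sets lebesgue")
      case True
      have "t0 \<le> t" "0 < t"
        using elim by auto
      then show ?thesis
        using contra True by (meson not_le order.strict_implies_order)
    qed (use elim assms in \<open>simp add: measure_notin_sets\<close>)
    then show ?case
      using elim by (simp add: divide_le_eq)
  qed
  then have "upper_density D \<le> ereal (1 - \<delta>)"
    unfolding upper_density_def by (rule Limsup_bounded)
  then show False
    using assms by simp
qed

lemma upper_density_eq_1_if_large_subsets:
  assumes meas: "\<And>t. D \<inter> {0..t} \<in> sets lebesgue"
    and large: "\<And>i0. \<exists>i\<ge>i0. \<exists>t\<ge>real i. \<exists>G\<in>lmeasurable.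
                  G \<subseteq> D \<inter> {0..t} \<and> (1 - 2 / (real i + 1)) * t \<le> measure lebesgue G"
  shows "upper_density D = 1"
proof (rule upper_density_eq_1I)
  fix \<delta> t0 :: real
  assume "0 < \<delta>"
  obtain i0 :: nat where i0: "max 1 (max t0 (2 / \<delta>)) \<le> real i0"
    using real_arch_simple by blast
  obtain i t G where i: "i0 \<le> i" "real i \<le> t" and G: "G \<in> lmeasurable" "G \<subseteq> D \<inter> {0..t}"
    and measure_G: "(1 - 2 / (real i + 1)) * t \<le> measure lebesgue G"
    using large[of i0] by blast
  have t: "t0 \<le> t" "1 \<le> t"
    using i i0 by linarith+
  have "2 / \<delta> \<le> real i + 1"
    using i i0 by linarith
  then have "1 - \<delta> \<le> 1 - 2 / (real i + 1)"
    using \<open>0 < \<delta>\<close> by (simp add: field_simps)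
  then have "(1 - \<delta>) * t \<le> (1 - 2 / (real i + 1)) * t"
    using t by (intro mult_right_mono) auto
  also have "\<dots> \<le> measure lebesgue G"
    by (rule measure_G)
  also have "\<dots> \<le> measure lebesgue (D \<inter> {0..t})"
    using G lmeasurable_if_subset_Icc[OF _ meas[of t], of 0 t]
    by (intro measure_mono_fmeasurable) (auto dest: fmeasurableD)
  finally show "\<exists>t\<ge>t0. 0 < t \<and> (1 - \<delta>) * t \<le> measure lebesgue (D \<inter> {0..t})"
    using t by (intro exI[of _ t]) auto
qed

lemma measure_Diff_ge:
  assumes "A \<in> fmeasurable M" "C \<in> fmeasurable M"
  shows "measure M A - measure M C \<le> measure M (A - C)"
proof -
  have "measure M A \<le> measure M ((A - C) \<union> C)"
    using assms by (intro measure_mono_fmeasurable) auto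
  also have "\<dots> \<le> measure M (A - C) + measure M C"
    using assms by (intro measure_Un_le) auto
  finally show ?thesis by simp
qed

lemma eventually_measure_le_if_eventually_notin:
  fixes E :: "nat \<Rightarrow> real set"
  assumes meas: "\<And>k. E k \<in> sets lebesgue" and sub: "\<And>k. E k \<subseteq> {0..b}"
    and notin: "\<And>s. eventually (\<lambda>k. s \<notin> E k) sequentially" and "0 < \<eta>"
  shows "eventually (\<lambda>k. measure lebesgue (E k) \<le> \<eta>) sequentially"
proof -
  define F where "F k = (\<Union>k'\<in>{k..}. E k')" for k
  have F_meas: "F k \<in> lmeasurable" for k
    unfolding F_def using meas sub by (intro lmeasurable_if_subset_Icc[of _ 0 b]) auto
  have "(\<Inter>k. F k) = {}"
  proof safe
    fix s
    assume "s \<in> (\<Inter>k. F k)"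
    moreover obtain K where "\<And>k. k \<ge> K \<Longrightarrow> s \<notin> E k"
      using notin[of s] by (auto simp: eventually_sequentially)
    ultimately show "s \<in> {}"
      unfolding F_def by blast
  qed
  moreover have "(\<lambda>k. measure lebesgue (F k)) \<longlonglongrightarrow> measure lebesgue (\<Inter>k. F k)"
  proof (rule Lim_measure_decseq)
    show "range F \<subseteq> sets lebesgue"
      using F_meas by (auto dest: fmeasurableD)
    show "decseq F"
      unfolding F_def decseq_def by (auto intro: order_trans)
    show "emeasure lebesgue (F k) \<noteq> \<infinity>" for k
      using emeasure_eq_measure2[OF F_meas[of k]] by simp
  qed
  ultimately have "eventually (\<lambda>k. measure lebesgue (F k) < \<eta>) sequentially"
    using \<open>0 < \<eta>\<close> by (auto dest: order_tendstoD)
  then show ?thesis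
  proof eventually_elim
    case (elim k)
    moreover have "measure lebesgue (E k) \<le> measure lebesgue (F k)"
      by (rule measure_mono_fmeasurable[OF _ meas F_meas]) (auto simp: F_def)
    ultimately show ?case by simp
  qed
qed

lemma measure_UN_le_half_powers:
  fixes A :: "nat \<Rightarrow> real set"
  assumes meas: "\<And>l. A l \<in> sets lebesgue" and sub: "\<And>l. A l \<subseteq> {0..b}"
    and le: "\<And>l. measure lebesgue (A l) \<le> (1/2)^(Suc (l + k))"
  shows "measure lebesgue (\<Union>l. A l) \<le> (1/2)^k"
proof -
  have A_meas: "A l \<in> lmeasurable" for l
    by (rule lmeasurable_if_subset_Icc[OF sub meas])
  have sums: "(\<lambda>l. (1/2::real)^(Suc (l + k))) sums ((1/2)^k)"
    using sums_mult[OF power_half_series, of "(1/2::real)^k"]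
    by (simp add: power_add mult.commute mult.left_commute)
  have "measure lebesgue (\<Union>l. A l) \<le> (\<Sum>l. measure lebesgue (A l))"
  proof (rule measure_subadditive_countably)
    have "(\<Sum>l. emeasure lebesgue (A l)) \<le> (\<Sum>l. ennreal ((1/2)^(Suc (l + k))))"
      using le A_meas by (intro suminf_le) (auto simp: emeasure_eq_measure2)
    then show "(\<Sum>l. emeasure lebesgue (A l)) \<noteq> \<infinity>"
      using sums by (auto simp: suminf_ennreal2 sums_summable sums_unique[symmetric] top_unique)
  qed (use meas in auto)
  also have "\<dots> \<le> (\<Sum>l. (1/2)^(Suc (l + k)))"
    using le sums by (intro suminf_le summable_comparison_test'[OF sums_summable[OF sums]]) auto
  also have "\<dots> = (1/2)^k"
    using sums by (rule sums_unique[symmetric])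
  finally show ?thesis .
qed


section \<open>Orbits of the operator families\<close>

locale orbit_families =
  X: frechet_seminorms scX p + Y: frechet_seminorms scY pY
  for scX :: "'k::real_normed_field \<Rightarrow> 'x::ab_group_add \<Rightarrow> 'x"
    and p :: "nat \<Rightarrow> 'x \<Rightarrow> real"
    and scY :: "'k \<Rightarrow> 'y::ab_group_add \<Rightarrow> 'y"
    and pY :: "nat \<Rightarrow> 'y \<Rightarrow> real" +
  fixes J :: "'j set"
    and X0 :: "'x set"
    and T :: "'j \<Rightarrow> real \<Rightarrow> 'x \<Rightarrow> 'y"
  assumes finite_J: "finite J"
    and X0_subspace: "X.subspace X0"
    and X0_dense: "X.dp.mtopology closure_of X0 = UNIV"
    and T_linear: "\<And>j t. j \<in> J \<Longrightarrow> 0 \<le> t \<Longrightarrow> Vector_Spaces.linear scX scY (T j t)"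
    and T_continuous: "\<And>j t. j \<in> J \<Longrightarrow> 0 \<le> t \<Longrightarrow> continuous_map X.dp.mtopology Y.dp.mtopology (T j t)"
    and T_strongly_continuous:
      "\<And>j x. j \<in> J \<Longrightarrow> continuous_map (top_of_set {0..}) Y.dp.mtopology (\<lambda>t. T j t x)"
    and T_tendsto_0: "\<And>j x. j \<in> J \<Longrightarrow> x \<in> X0 \<Longrightarrow> limitin Y.dp.mtopology (\<lambda>t. T j t x) 0 at_top"
begin

lemma T_hom: "j \<in> J \<Longrightarrow> 0 \<le> t \<Longrightarrow> module_hom scX scY (T j t)"
  by (rule module_hom_linearI[OF T_linear])

lemma T_add: "j \<in> J \<Longrightarrow> 0 \<le> t \<Longrightarrow> T j t (x + y) = T j t x + T j t y"
  using module_hom.add[OF T_hom] by blast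

lemma T_diff: "j \<in> J \<Longrightarrow> 0 \<le> t \<Longrightarrow> T j t (x - y) = T j t x - T j t y"
  using module_hom.diff[OF T_hom] by blast

lemma T_scale: "j \<in> J \<Longrightarrow> 0 \<le> t \<Longrightarrow> T j t (scX c x) = scY c (T j t x)"
  using module_hom.scale[OF T_hom] by blast

lemma T_sum: "j \<in> J \<Longrightarrow> 0 \<le> t \<Longrightarrow> T j t (sum g A) = (\<Sum>a\<in>A. T j t (g a))"
  using module_hom.sum[OF T_hom] by blast

lemma T_zero: "j \<in> J \<Longrightarrow> 0 \<le> t \<Longrightarrow> T j t 0 = 0"
  using module_hom.zero[OF T_hom] by blast

lemma orbit_seminorm_scale: "j \<in> J \<Longrightarrow> 0 \<le> t \<Longrightarrow> 0 \<le> c \<Longrightarrow> pY n (T j t (scX (of_real c) x)) = c * pY n (T j t x)"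
  by (simp add: T_scale Y.seminorm_scale)

lemma continuous_on_orbit_seminorm: "j \<in> J \<Longrightarrow> continuous_on {0..} (\<lambda>s. pY n (T j s x))"
  using continuous_map_compose[OF T_strongly_continuous Y.continuous_map_seminorm]
  by (simp add: o_def)

lemma orbit_seminorm_tendsto_0: "j \<in> J \<Longrightarrow> x \<in> X0 \<Longrightarrow> ((\<lambda>s. pY n (T j s x)) \<longlongrightarrow> 0) at_top"
  using Y.tendsto_seminorm_if_limitin[OF T_tendsto_0, of j x n] by simp

lemma eventually_orbits_le:
  assumes "finite F" "F \<subseteq> X0" "0 < \<eta>"
  shows "eventually (\<lambda>s. \<forall>u\<in>F. \<forall>j\<in>J. pY n (T j s u) \<le> \<eta>) at_top"
proof (intro eventually_ball_finite assms(1) finite_J ballI)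
  fix u j
  assume "u \<in> F" "j \<in> J"
  then have "((\<lambda>s. pY n (T j s u)) \<longlongrightarrow> 0) at_top"
    using orbit_seminorm_tendsto_0 assms(2) by blast
  then have "eventually (\<lambda>s. pY n (T j s u) < \<eta>) at_top"
    using assms(3) by (rule order_tendstoD(2))
  then show "eventually (\<lambda>s. pY n (T j s u) \<le> \<eta>) at_top"
    by eventually_elim simp
qed

lemma orbit_seminorm_tendsto_pointwise:
  assumes "limitin X.dp.mtopology v x sequentially" "j \<in> J" "0 \<le> s"
  shows "(\<lambda>k. pY n (T j s (v k))) \<longlonglongrightarrow> pY n (T j s x)"
proof -
  have "limitin Y.dp.mtopology (T j s \<circ> v) (T j s x) sequentially"
    by (rule continuous_map_limit[OF T_continuous[OF assms(2,3)] assms(1)])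
  then have "(\<lambda>k. pY n (T j s (v k) - T j s x)) \<longlonglongrightarrow> 0"
    using Y.tendsto_seminorm_if_limitin by (simp add: o_def)
  then have "(\<lambda>k. pY n (T j s (v k)) - pY n (T j s x)) \<longlonglongrightarrow> 0"
  proof (rule Lim_null_comparison[rotated])
    show "\<forall>\<^sub>F k in sequentially. norm (pY n (T j s (v k)) - pY n (T j s x)) \<le> pY n (T j s (v k) - T j s x)"
      using Y.seminorm_diff_ge[of n "T j s (v _)" "T j s x"] Y.seminorm_diff_ge[of n "T j s x" "T j s (v _)"]
        Y.seminorm_diff_commute[of n "T j s x" "T j s (v _)"]
      by (intro always_eventually allI) (simp add: abs_le_iff)
  qed
  then show ?thesis
    by (simp add: LIM_zero_iff)
qed

lemma orbit_seminorm_bounded: "\<exists>M\<ge>0. \<forall>s\<in>{0..f}. \<forall>j\<in>J. pY n (T j s x) \<le> M"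
proof -
  have "continuous_on {0..f} (\<lambda>s. \<Sum>j\<in>J. pY n (T j s x))"
    by (intro continuous_on_sum continuous_on_subset[OF continuous_on_orbit_seminorm]) auto
  then have "bounded ((\<lambda>s. \<Sum>j\<in>J. pY n (T j s x)) ` {0..f})"
    by (intro compact_imp_bounded compact_continuous_image) auto
  then obtain M where M: "\<And>s. s \<in> {0..f} \<Longrightarrow> norm (\<Sum>j\<in>J. pY n (T j s x)) \<le> M"
    unfolding bounded_iff by blast
  have "pY n (T j s x) \<le> max M 0" if "s \<in> {0..f}" "j \<in> J" for s j
  proof -
    have "pY n (T j s x) \<le> (\<Sum>j\<in>J. pY n (T j s x))"
      using that finite_J by (intro member_le_sum) auto
    also have "\<dots> \<le> M"
      using M[OF that(1)] by simp
    finally show ?thesis by simp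
  qed
  then show ?thesis
    by (intro exI[of _ "max M 0"]) auto
qed

definition deviation :: "nat \<Rightarrow> real \<Rightarrow> 'x \<Rightarrow> 'x \<Rightarrow> real set" where
  "deviation n b u x = {s\<in>{0..b}. \<exists>j\<in>J. 1 < \<bar>pY n (T j s u) - pY n (T j s x)\<bar>}"

lemma deviation_subset: "deviation n b u x \<subseteq> {0..b}"
  by (auto simp: deviation_def)

lemma deviation_measurable: "deviation n b u x \<in> sets lebesgue"
proof -
  have "closed {s\<in>{0..b}. \<forall>j\<in>J. pY n (T j s u) - pY n (T j s x) \<in> {-1..1}}"
    by (intro closed_Collect_ball_in continuous_intros
        continuous_on_subset[OF continuous_on_orbit_seminorm]) auto
  moreover have "1 < \<bar>y\<bar> \<longleftrightarrow> y \<notin> {-1..1}" for y :: real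
    by auto
  then have "deviation n b u x = {0..b} - {s\<in>{0..b}. \<forall>j\<in>J. pY n (T j s u) - pY n (T j s x) \<in> {-1..1}}"
    unfolding deviation_def by auto
  ultimately show ?thesis
    by (simp add: borel_closed sets.Diff)
qed

lemma orbit_seminorm_off_deviation:
  "s \<in> {0..b} - deviation n b u x \<Longrightarrow> j \<in> J \<Longrightarrow> \<bar>pY n (T j s u) - pY n (T j s x)\<bar> \<le> 1"
  by (auto simp: deviation_def not_less)

lemma eventually_measure_deviation_le:
  assumes "limitin X.dp.mtopology v x sequentially" "0 < \<eta>"
  shows "eventually (\<lambda>k. measure lebesgue (deviation n b (v k) x) \<le> \<eta>) sequentially"
proof (rule eventually_measure_le_if_eventually_notin[OF deviation_measurable deviation_subset _ assms(2)])
  fix s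
  show "eventually (\<lambda>k. s \<notin> deviation n b (v k) x) sequentially"
  proof (cases "0 \<le> s")
    case True
    have "eventually (\<lambda>k. \<forall>j\<in>J. \<bar>pY n (T j s (v k)) - pY n (T j s x)\<bar> < 1) sequentially"
    proof (intro eventually_ball_finite finite_J ballI)
      fix j
      assume "j \<in> J"
      with orbit_seminorm_tendsto_pointwise[OF assms(1) this True, of n]
      have "(\<lambda>k. pY n (T j s (v k)) - pY n (T j s x)) \<longlonglongrightarrow> 0"
        by (simp add: LIM_zero_iff)
      from tendstoD[OF this, of 1]
      show "eventually (\<lambda>k. \<bar>pY n (T j s (v k)) - pY n (T j s x)\<bar> < 1) sequentially"
        by simp
    qed
    then show ?thesis
      by eventually_elim (auto simp: deviation_def)
  qed (simp add: deviation_def)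
qed

lemma orbit_dist_eq: "j \<in> J \<Longrightarrow> 0 \<le> s \<Longrightarrow> Y.dp (T j s x) (T j s y) = Y.dp (T j s (x - y)) 0"
  using Y.dp_translate[of "T j s x" "T j s y"] by (simp add: T_diff)

lemma orbit_dist_set_eq:
  "(\<Inter>j\<in>J. {s. 0 \<le> s \<and> P (Y.dp (T j s x) (T j s y))}) = (\<Inter>j\<in>J. {s. 0 \<le> s \<and> P (Y.dp (T j s (x - y)) 0)})"
  by (intro INF_cong refl Collect_cong conj_cong) (simp_all add: orbit_dist_eq)

lemma orbit_combination:
  "j \<in> J \<Longrightarrow> 0 \<le> s \<Longrightarrow> T j s (\<Sum>k\<in>K. scX (r k) (x k)) = (\<Sum>k\<in>K. scY (r k) (T j s (x k)))"
  by (simp add: T_sum T_scale)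

lemma continuous_on_orbit_dist:
  assumes "j \<in> J"
  shows "continuous_on {0..t} (\<lambda>s. Y.dp (T j s z) 0)"
proof -
  have "continuous_on {0..} (\<lambda>s. Y.dp (T j s z) 0)"
    using Y.continuous_map_dp[OF T_strongly_continuous[OF assms] continuous_map_const[THEN iffD2]] by simp
  then show ?thesis
    by (rule continuous_on_subset) auto
qed

lemma orbit_dist_ge_set_measurable:
  "(\<Inter>j\<in>J. {s. 0 \<le> s \<and> c \<le> Y.dp (T j s z) 0}) \<inter> {0..t} \<in> sets lebesgue"
proof -
  have "closed {s\<in>{0..t}. \<forall>j\<in>J. Y.dp (T j s z) 0 \<in> {c..}}"
    by (intro closed_Collect_ball_in continuous_on_orbit_dist) auto
  moreover have "(\<Inter>j\<in>J. {s. 0 \<le> s \<and> c \<le> Y.dp (T j s z) 0}) \<inter> {0..t} = {s\<in>{0..t}. \<forall>j\<in>J. Y.dp (T j s z) 0 \<in> {c..}}"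
    by auto
  ultimately show ?thesis
    by (simp add: borel_closed)
qed

lemma orbit_dist_less_set_measurable:
  "(\<Inter>j\<in>J. {s. 0 \<le> s \<and> Y.dp (T j s z) 0 < c}) \<inter> {0..t} \<in> sets lebesgue"
proof -
  have "closed {s\<in>{0..t}. \<exists>j\<in>J. Y.dp (T j s z) 0 \<in> {c..}}"
    by (intro closed_Collect_bex_in finite_J continuous_on_orbit_dist) auto
  moreover have "(\<Inter>j\<in>J. {s. 0 \<le> s \<and> Y.dp (T j s z) 0 < c}) \<inter> {0..t}
      = {0..t} - {s\<in>{0..t}. \<exists>j\<in>J. Y.dp (T j s z) 0 \<in> {c..}}"
    by (force simp: not_le)
  ultimately show ?thesis
    by (simp add: borel_closed sets.Diff)
qed

end

section \<open>The stages of the construction\<close>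

text \<open>
  At stage n the vector coeff * vec is added. On the quiet window [quiet_start, quiet_end] the orbits
  of all earlier vectors and, off a set of measure at most 2^-n, the orbits of the new one
  are small; on B \<inter> [loud_start, loud_end], off a set of measure at most 1, the orbits of the new
  vector exceed n + 1.
\<close>

datatype 'x stage =
  Stage (coeff: real) (vec: 'x) (quiet_start: real) (quiet_end: real) (loud_start: real) (loud_end: real)

locale divergent_orbit = orbit_families +
  fixes x\<^sub>b and m :: nat and B :: "real set" and v
  assumes B_nonneg: "B \<subseteq> {0..}"
    and B_density: "upper_density B = 1"
    and B_divergent: "\<And>j. j \<in> J \<Longrightarrow> filterlim (\<lambda>t. pY m (T j t x\<^sub>b)) at_top (inf at_top (principal B))"
    and v_X0: "\<And>k. v k \<in> X0"
    and v_tendsto: "limitin X.dp.mtopology v x\<^sub>b sequentially"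
begin

definition stage_vector where
  "stage_vector st = scX (of_real (coeff st)) (vec st)"

definition admissible_stage :: "nat \<Rightarrow> _" where
  "admissible_stage n F st \<longleftrightarrow>
    (let c = coeff st; y = vec st; e = quiet_start st; f = quiet_end st; a = loud_start st; b = loud_end st
     in 0 < c \<and> c \<le> 1 \<and> y \<in> X0 \<and> real n + 1 \<le> e \<and> f = (real n + 1) * e \<and> f \<le> a
       \<and> (real n + 1) * (a + 2) \<le> b
       \<and> (\<forall>u\<in>F. \<forall>s\<ge>e. \<forall>j\<in>J. pY n (T j s u) \<le> (1/2)^n / (real n + 1))
       \<and> B \<inter> {0..b} \<in> sets lebesgue \<and> (1 - 1 / (real n + 2)) * b \<le> measure lebesgue (B \<inter> {0..b})
       \<and> measure lebesgue (deviation m b y x\<^sub>b) \<le> 1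
       \<and> (\<forall>s\<in>B \<inter> {a..b} - deviation m b y x\<^sub>b. \<forall>j\<in>J. real n + 1 \<le> c * pY m (T j s y))
       \<and> measure lebesgue (deviation n f y x\<^sub>b) \<le> (1/2)^n
       \<and> (\<forall>s\<in>{0..f} - deviation n f y x\<^sub>b. \<forall>j\<in>J. c * pY n (T j s y) \<le> (1/2)^(Suc n))
       \<and> X.dp (stage_vector st) 0 \<le> (1/2)^n)"

lemma stage_vector_X0: "admissible_stage n F st \<Longrightarrow> stage_vector st \<in> X0"
proof -
  assume "admissible_stage n F st"
  then have "vec st \<in> X0"
    unfolding admissible_stage_def Let_def by (elim conjE)
  then show ?thesis
    unfolding stage_vector_def by (rule X.subspace_scale[OF X0_subspace])
qed

lemma eventually_orbit_ge_on_B: "eventually (\<lambda>s. s \<in> B \<longrightarrow> (\<forall>j\<in>J. K \<le> pY m (T j s x\<^sub>b))) at_top"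
proof -
  have "eventually (\<lambda>s. K \<le> pY m (T j s x\<^sub>b)) (inf at_top (principal B))" if "j \<in> J" for j
    using B_divergent[OF that] by (simp only: filterlim_at_top)
  then have "eventually (\<lambda>s. \<forall>j\<in>J. K \<le> pY m (T j s x\<^sub>b)) (inf at_top (principal B))"
    by (intro eventually_ball_finite[OF finite_J] ballI)
  then show ?thesis
    by (simp add: eventually_inf_principal)
qed

lemma exists_good_approximant:
  "\<exists>k. measure lebesgue (deviation m b (v k) x\<^sub>b) \<le> 1 \<and> measure lebesgue (deviation n f (v k) x\<^sub>b) \<le> (1/2)^n
     \<and> X.dp (v k) x\<^sub>b < (1/2)^(Suc n)"
proof -
  have "\<forall>\<epsilon>>0. eventually (\<lambda>k. X.dp (v k) x\<^sub>b < \<epsilon>) sequentially"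
    using v_tendsto by (simp add: X.dp.limitin_metric)
  moreover have "(0::real) < (1/2)^(Suc n)"
    by simp
  ultimately have "eventually (\<lambda>k. X.dp (v k) x\<^sub>b < (1/2)^(Suc n)) sequentially"
    by blast
  then have "eventually (\<lambda>k. measure lebesgue (deviation m b (v k) x\<^sub>b) \<le> 1
      \<and> measure lebesgue (deviation n f (v k) x\<^sub>b) \<le> (1/2)^n \<and> X.dp (v k) x\<^sub>b < (1/2)^(Suc n)) sequentially"
    by (intro eventually_conj eventually_measure_deviation_le v_tendsto) simp_all
  then show ?thesis
    by (rule eventually_happens'[OF sequentially_bot])
qed

lemma exists_loud_window:
  assumes "0 < c"
  shows "\<exists>a b. f \<le> a \<and> (real n + 1) * (a + 2) \<le> b \<and> B \<inter> {0..b} \<in> sets lebesgue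
    \<and> (1 - 1 / (real n + 2)) * b \<le> measure lebesgue (B \<inter> {0..b})
    \<and> (\<forall>y. \<forall>s\<in>B \<inter> {a..b} - deviation m b y x\<^sub>b. \<forall>j\<in>J. real n + 1 \<le> c * pY m (T j s y))"
proof -
  obtain a0 where a0: "\<And>s j. a0 \<le> s \<Longrightarrow> s \<in> B \<Longrightarrow> j \<in> J \<Longrightarrow> (real n + 1) / c + 1 \<le> pY m (T j s x\<^sub>b)"
    using eventually_orbit_ge_on_B[of "(real n + 1) / c + 1"]
    by (auto simp: eventually_at_top_linorder)
  define a where "a = max a0 f"
  obtain b where b: "(real n + 1) * (a + 2) \<le> b" "B \<inter> {0..b} \<in> sets lebesgue"
      "(1 - 1 / (real n + 2)) * b \<le> measure lebesgue (B \<inter> {0..b})"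
    using upper_density_eq_1D[OF B_density, of "1 / (real n + 2)" "(real n + 1) * (a + 2)"]
    by auto
  have "real n + 1 \<le> c * pY m (T j s y)"
    if "s \<in> B \<inter> {a..b} - deviation m b y x\<^sub>b" "j \<in> J" for s j y
  proof -
    have "(real n + 1) / c + 1 \<le> pY m (T j s x\<^sub>b)"
      using that a0 unfolding a_def by auto
    moreover have "pY m (T j s x\<^sub>b) - 1 \<le> pY m (T j s y)"
      using orbit_seminorm_off_deviation[of s b m y x\<^sub>b j] that B_nonneg by auto
    ultimately have "(real n + 1) / c \<le> pY m (T j s y)"
      by linarith
    then show ?thesis
      using assms by (simp add: pos_divide_le_eq mult.commute)
  qed
  then show ?thesis
    using b by (intro exI[of _ a] exI[of _ b]) (auto simp: a_def)
qed

lemma exists_stage: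
  assumes "finite F" "F \<subseteq> X0"
  shows "\<exists>st. admissible_stage n F st \<and> b0 + 1 \<le> quiet_start st"
proof -
  obtain e0 where e0: "\<And>s u j. e0 \<le> s \<Longrightarrow> u \<in> F \<Longrightarrow> j \<in> J \<Longrightarrow> pY n (T j s u) \<le> (1/2)^n / (real n + 1)"
    using eventually_orbits_le[OF assms, of "(1/2)^n / (real n + 1)" n]
    by (auto simp: eventually_at_top_linorder)
  define e where "e = max e0 (max (b0 + 1) (real n + 1))"
  define f where "f = (real n + 1) * e"
  obtain M where M: "0 \<le> M" "\<And>s j. s \<in> {0..f} \<Longrightarrow> j \<in> J \<Longrightarrow> pY n (T j s x\<^sub>b) \<le> M"
    using orbit_seminorm_bounded by blast
  obtain c where c: "0 < c" "c \<le> 1" "c * (M + 1) \<le> (1/2)^(Suc (Suc n))"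
      "c * p (Suc n) x\<^sub>b \<le> (1/2)^(Suc (Suc n))"
    using exists_small_factor[of "M + 1" "p (Suc n) x\<^sub>b" "(1/2)^(Suc (Suc n))"] M(1) by auto
  obtain a b where ab: "f \<le> a" "(real n + 1) * (a + 2) \<le> b" "B \<inter> {0..b} \<in> sets lebesgue"
      "(1 - 1 / (real n + 2)) * b \<le> measure lebesgue (B \<inter> {0..b})"
      "\<And>y s j. s \<in> B \<inter> {a..b} - deviation m b y x\<^sub>b \<Longrightarrow> j \<in> J \<Longrightarrow> real n + 1 \<le> c * pY m (T j s y)"
    using exists_loud_window[OF c(1), of f n] by blast
  obtain k where k: "measure lebesgue (deviation m b (v k) x\<^sub>b) \<le> 1"
      "measure lebesgue (deviation n f (v k) x\<^sub>b) \<le> (1/2)^n" "X.dp (v k) x\<^sub>b < (1/2)^(Suc n)"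
    using exists_good_approximant by blast
  have small: "c * pY n (T j s (v k)) \<le> (1/2)^(Suc n)"
    if "s \<in> {0..f} - deviation n f (v k) x\<^sub>b" "j \<in> J" for s j
  proof -
    have "pY n (T j s (v k)) \<le> M + 1"
      using orbit_seminorm_off_deviation[OF that] M(2)[of s j] that by auto
    then have "c * pY n (T j s (v k)) \<le> c * (M + 1)"
      using c by (intro mult_left_mono) auto
    moreover have "(1/2::real)^(Suc (Suc n)) \<le> (1/2)^(Suc n)"
      by simp
    ultimately show ?thesis
      using c(3) by linarith
  qed
  have "admissible_stage n F (Stage c (v k) e f a b)"
    unfolding admissible_stage_def Let_def stage.sel
  proof (intro conjI)
    show "\<forall>u\<in>F. \<forall>s\<ge>e. \<forall>j\<in>J. pY n (T j s u) \<le> (1/2)^n / (real n + 1)"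
      using e0 unfolding e_def by auto
    show "X.dp (stage_vector (Stage c (v k) e f a b)) 0 \<le> (1/2)^n"
      unfolding stage_vector_def stage.sel using c k(3)
      by (intro X.dp_scale_approximant_le) auto
    show "\<forall>s\<in>B \<inter> {a..b} - deviation m b (v k) x\<^sub>b. \<forall>j\<in>J. real n + 1 \<le> c * pY m (T j s (v k))"
      using ab(5) by blast
    show "\<forall>s\<in>{0..f} - deviation n f (v k) x\<^sub>b. \<forall>j\<in>J. c * pY n (T j s (v k)) \<le> (1/2)^(Suc n)"
      using small by blast
  qed (use c ab k v_X0 in \<open>simp_all add: e_def f_def\<close>)
  moreover have "b0 + 1 \<le> e"
    unfolding e_def by simp
  ultimately show ?thesis
    by (intro exI[of _ "Stage c (v k) e f a b"]) simp
qed

lemma exists_stage_sequence: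
  "\<exists>F st. \<forall>i. admissible_stage i (F i) (st i) \<and> F (Suc i) = insert (stage_vector (st i)) (F i)
     \<and> loud_end (st i) + 1 \<le> quiet_start (st (Suc i))"
proof -
  let ?P = "\<lambda>n S. finite (fst S) \<and> fst S \<subseteq> X0 \<and> admissible_stage n (fst S) (snd S)"
  let ?Q = "\<lambda>n S S'. fst S' = insert (stage_vector (snd S)) (fst S) \<and> loud_end (snd S) + 1 \<le> quiet_start (snd S')"
  have "\<exists>S. \<forall>n. ?P n (S n) \<and> ?Q n (S n) (S (Suc n))"
  proof (rule dependent_nat_choice)
    obtain st where "admissible_stage 0 {} st"
      using exists_stage[of "{}" 0 0] by auto
    then show "\<exists>S. ?P 0 S"
      by (intro exI[of _ "({}, st)"]) simp
  next
    fix S n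
    assume "?P n S"
    then have F': "finite (insert (stage_vector (snd S)) (fst S))" "insert (stage_vector (snd S)) (fst S) \<subseteq> X0"
      using stage_vector_X0 by auto
    then obtain st' where "admissible_stage (Suc n) (insert (stage_vector (snd S)) (fst S)) st'"
        "loud_end (snd S) + 1 \<le> quiet_start st'"
      using exists_stage by blast
    with F' show "\<exists>S'. ?P (Suc n) S' \<and> ?Q n S S'"
      by (intro exI[of _ "(insert (stage_vector (snd S)) (fst S), st')"]) simp
  qed
  then obtain S where "\<And>n. ?P n (S n) \<and> ?Q n (S n) (S (Suc n))"
    by blast
  then show ?thesis
    by (intro exI[of _ "\<lambda>i. fst (S i)"] exI[of _ "\<lambda>i. snd (S i)"]) blast
qed

end

section \<open>Subseries of the stage vectors\<close>

locale stage_sequence = divergent_orbit +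
  fixes F and st
  assumes admissible_stage: "\<And>i. admissible_stage i (F i) (st i)"
    and F_Suc: "\<And>i. F (Suc i) = insert (stage_vector (st i)) (F i)"
    and stages_disjoint: "\<And>i. loud_end (st i) + 1 \<le> quiet_start (st (Suc i))"
begin

abbreviation u where
  "u i \<equiv> stage_vector (st i)"

definition loud_exception :: "nat \<Rightarrow> real set" where
  "loud_exception i = deviation m (loud_end (st i)) (vec (st i)) x\<^sub>b"

definition quiet_exception :: "nat \<Rightarrow> real set" where
  "quiet_exception i = deviation i (quiet_end (st i)) (vec (st i)) x\<^sub>b"

lemma
  coeff_pos: "0 < coeff (st i)" and
  quiet_start_ge: "real i + 1 \<le> quiet_start (st i)" and
  quiet_end_eq: "quiet_end (st i) = (real i + 1) * quiet_start (st i)" and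
  quiet_end_le_loud_start: "quiet_end (st i) \<le> loud_start (st i)" and
  loud_end_ge: "(real i + 1) * (loud_start (st i) + 2) \<le> loud_end (st i)" and
  old_orbits_small: "\<And>x s j. x \<in> F i \<Longrightarrow> quiet_start (st i) \<le> s \<Longrightarrow> j \<in> J \<Longrightarrow>
     pY i (T j s x) \<le> (1/2)^i / (real i + 1)" and
  B_measurable: "B \<inter> {0..loud_end (st i)} \<in> sets lebesgue" and
  B_dense: "(1 - 1 / (real i + 2)) * loud_end (st i) \<le> measure lebesgue (B \<inter> {0..loud_end (st i)})" and
  measure_loud_exception: "measure lebesgue (loud_exception i) \<le> 1" and
  stage_large: "\<And>s j. s \<in> B \<inter> {loud_start (st i)..loud_end (st i)} - loud_exception i \<Longrightarrow> j \<in> J \<Longrightarrow>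
     real i + 1 \<le> coeff (st i) * pY m (T j s (vec (st i)))" and
  measure_quiet_exception: "measure lebesgue (quiet_exception i) \<le> (1/2)^i" and
  stage_small: "\<And>s j. s \<in> {0..quiet_end (st i)} - quiet_exception i \<Longrightarrow> j \<in> J \<Longrightarrow>
     coeff (st i) * pY i (T j s (vec (st i))) \<le> (1/2)^(Suc i)" and
  dp_stage_vector_le: "X.dp (u i) 0 \<le> (1/2)^i"
  using admissible_stage[of i] unfolding admissible_stage_def Let_def loud_exception_def quiet_exception_def
  by blast+

lemma quiet_start_le_quiet_end: "quiet_start (st i) \<le> quiet_end (st i)"
  using quiet_end_eq[of i] quiet_start_ge[of i] by (simp add: mult_le_cancel_right1)

lemma loud_start_le_loud_end: "loud_start (st i) \<le> loud_end (st i)"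
proof -
  have "0 \<le> loud_start (st i)"
    using quiet_start_ge[of i] quiet_start_le_quiet_end[of i] quiet_end_le_loud_start[of i] by linarith
  then have "1 * (loud_start (st i) + 2) \<le> (real i + 1) * (loud_start (st i) + 2)"
    by (intro mult_right_mono) auto
  then show ?thesis
    using loud_end_ge[of i] by simp
qed

lemma quiet_start_le_loud_end: "quiet_start (st i) \<le> loud_end (st i)"
  using quiet_start_le_quiet_end quiet_end_le_loud_start loud_start_le_loud_end by (blast intro: order_trans)

lemma loud_end_le_later_quiet_start: "i < i' \<Longrightarrow> loud_end (st i) \<le> quiet_start (st i')"
proof (induct i' rule: less_induct)
  case (less i')
  then obtain k where k: "i' = Suc k"
    by (cases i') auto
  have "loud_end (st k) \<le> quiet_start (st i')"
    using stages_disjoint[of k] k by simp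
  moreover have "loud_end (st i) \<le> loud_end (st k)"
  proof (cases "i = k")
    case False
    then have "loud_end (st i) \<le> quiet_start (st k)"
      using less k by simp
    then show ?thesis
      using quiet_start_le_loud_end[of k] by linarith
  qed simp
  ultimately show ?case
    by simp
qed

lemma quiet_end_mono: "i \<le> i' \<Longrightarrow> quiet_end (st i) \<le> quiet_end (st i')"
proof (cases "i = i'")
  case False
  assume "i \<le> i'"
  then have "loud_end (st i) \<le> quiet_start (st i')"
    using False by (intro loud_end_le_later_quiet_start) simp
  then show ?thesis
    using quiet_end_le_loud_start[of i] loud_start_le_loud_end[of i] quiet_start_le_quiet_end[of i']
    by linarith
qed simp

lemma stage_vector_in_later_F: "i < i' \<Longrightarrow> u i \<in> F i'"
proof (induct i' rule: less_induct)
  case (less i')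
  then obtain k where "i' = Suc k"
    by (cases i') auto
  with less F_Suc[of k] show ?case
    by (cases "i = k") auto
qed

lemma orbit_stage_vector:
  "j \<in> J \<Longrightarrow> 0 \<le> s \<Longrightarrow> pY n (T j s (u i)) = coeff (st i) * pY n (T j s (vec (st i)))"
  unfolding stage_vector_def using coeff_pos[of i] by (simp add: orbit_seminorm_scale)

lemma earlier_orbit_small:
  "i' < i \<Longrightarrow> quiet_start (st i) \<le> s \<Longrightarrow> j \<in> J \<Longrightarrow> n \<le> i \<Longrightarrow> pY n (T j s (u i')) \<le> (1/2)^i / (real i + 1)"
  using old_orbits_small[OF stage_vector_in_later_F] Y.seminorm_mono order_trans by blast

lemma orbit_small_off_quiet_exception:
  assumes "s \<in> {0..quiet_end (st i)} - quiet_exception i" "j \<in> J" "n \<le> i"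
  shows "pY n (T j s (u i)) \<le> (1/2)^(Suc i)"
proof -
  have "pY n (T j s (u i)) \<le> coeff (st i) * pY i (T j s (vec (st i)))"
    using assms coeff_pos[of i] Y.seminorm_mono[OF assms(3)]
    by (auto simp: orbit_stage_vector intro: mult_left_mono)
  also have "\<dots> \<le> (1/2)^(Suc i)"
    by (rule stage_small[OF assms(1,2)])
  finally show ?thesis .
qed

lemma orbit_large_off_loud_exception:
  assumes "s \<in> B \<inter> {loud_start (st i)..loud_end (st i)} - loud_exception i" "j \<in> J"
  shows "real i + 1 \<le> pY m (T j s (u i))"
  using stage_large[OF assms] assms B_nonneg by (auto simp: orbit_stage_vector)

definition subseries_partial :: "nat set \<Rightarrow> nat \<Rightarrow> _" where
  "subseries_partial I Q = (\<Sum>i\<in>I \<inter> {..<Q}. u i)"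

lemma subseries_partial_diff:
  assumes "M \<le> Q"
  shows "subseries_partial I Q - subseries_partial I M = (\<Sum>i\<in>I \<inter> {M..<Q}. u i)"
proof -
  have split: "I \<inter> {..<Q} = (I \<inter> {..<M}) \<union> (I \<inter> {M..<Q})"
    using assms by auto
  have "subseries_partial I Q = subseries_partial I M + (\<Sum>i\<in>I \<inter> {M..<Q}. u i)"
    unfolding subseries_partial_def split by (rule sum.union_disjoint) auto
  then show ?thesis
    by simp
qed

lemma subseries_partial_Suc:
  "subseries_partial I (Suc i) = subseries_partial I i + (if i \<in> I then u i else 0)"
proof (cases "i \<in> I")
  case True
  then have "I \<inter> {..<Suc i} = insert i (I \<inter> {..<i})"
    by auto
  then show ?thesis
    using True by (simp add: subseries_partial_def)
next
  case False
  then have "I \<inter> {..<Suc i} = I \<inter> {..<i}"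
    by (auto simp: less_Suc_eq)
  then show ?thesis
    using False by (simp add: subseries_partial_def)
qed

lemma subseries_partial_Cauchy: "X.dp.MCauchy (subseries_partial I)"
  unfolding X.dp.MCauchy_def
proof (intro conjI allI impI)
  fix \<epsilon> :: real
  assume "0 < \<epsilon>"
  then obtain Q0 where Q0: "(1/2::real)^Q0 < \<epsilon>/2"
    using real_arch_pow_inv[of "\<epsilon>/2" "1/2"] by auto
  have close: "X.dp (subseries_partial I n') (subseries_partial I n) < \<epsilon>" if "Q0 \<le> n" "n \<le> n'" for n n'
  proof -
    have "X.dp (subseries_partial I n') (subseries_partial I n) = X.dp (\<Sum>i\<in>I \<inter> {n..<n'}. u i) 0"
      using subseries_partial_diff[OF that(2)] X.dp_translate[of "subseries_partial I n'"] by simp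
    also have "\<dots> \<le> (\<Sum>i\<in>I \<inter> {n..<n'}. X.dp (u i) 0)"
      by (rule X.dp_sum_le)
    also have "\<dots> \<le> (\<Sum>i\<in>I \<inter> {n..<n'}. 2 * (1/2)^(Suc i))"
      using dp_stage_vector_le by (intro sum_mono) simp
    also have "\<dots> \<le> (\<Sum>i\<in>{n..<n'}. 2 * (1/2)^(Suc i))"
      by (intro sum_mono2) auto
    also have "\<dots> = 2 * (\<Sum>i\<in>{n..<n'}. (1/2)^(Suc i))"
      by (simp only: sum_distrib_left)
    also have "\<dots> \<le> 2 * (1/2)^n"
      using sum_half_powers_le[of n n'] by simp
    also have "\<dots> \<le> 2 * (1/2)^Q0"
      using that(1) by (simp add: power_decreasing)
    finally show ?thesis
      using Q0 by simp
  qed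
  show "\<exists>Q. \<forall>n n'. Q \<le> n \<longrightarrow> Q \<le> n' \<longrightarrow> X.dp (subseries_partial I n) (subseries_partial I n') < \<epsilon>"
  proof (intro exI allI impI)
    fix n n'
    assume "Q0 \<le> n" "Q0 \<le> n'"
    show "X.dp (subseries_partial I n) (subseries_partial I n') < \<epsilon>"
    proof (cases "n \<le> n'")
      case True
      then show ?thesis
        using close[OF \<open>Q0 \<le> n\<close> True] X.dp_commute[of "subseries_partial I n" "subseries_partial I n'"] by linarith
    next
      case False
      then show ?thesis
        using close[OF \<open>Q0 \<le> n'\<close>, of n] by simp
    qed
  qed
qed simp

definition subseries :: "nat set \<Rightarrow> _" where
  "subseries I = (SOME w. limitin X.dp.mtopology (subseries_partial I) w sequentially)"

lemma subseries_partial_tendsto: "limitin X.dp.mtopology (subseries_partial I) (subseries I) sequentially"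
proof -
  have "X.dp.mcomplete"
    using X.frechet by (simp add: frechet_space_def)
  then show ?thesis
    using subseries_partial_Cauchy[of I] unfolding X.dp.mcomplete_def subseries_def by (metis someI_ex)
qed

lemma orbit_subseries_tail_le:
  assumes "j \<in> J" "0 \<le> s" "n \<le> i0"
    and off_exceptions: "\<And>i. i0 \<le> i \<Longrightarrow> s \<in> {0..quiet_end (st i)} - quiet_exception i"
  shows "pY n (T j s (subseries I) - T j s (subseries_partial I i0)) \<le> (1/2)^i0"
proof (rule Y.seminorm_limit_le)
  show "limitin Y.dp.mtopology (\<lambda>Q. T j s (subseries_partial I Q)) (T j s (subseries I)) sequentially"
    using continuous_map_limit[OF T_continuous[OF assms(1,2)] subseries_partial_tendsto] by (simp add: o_def)
  fix Q
  assume "i0 \<le> Q"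
  have "pY n (T j s (subseries_partial I Q) - T j s (subseries_partial I i0))
      \<le> (\<Sum>i\<in>I \<inter> {i0..<Q}. pY n (T j s (u i)))"
    using subseries_partial_diff[OF \<open>i0 \<le> Q\<close>, of I] Y.seminorm_sum_le
    by (simp add: T_diff[OF assms(1,2), symmetric] T_sum[OF assms(1,2)])
  also have "\<dots> \<le> (\<Sum>i\<in>I \<inter> {i0..<Q}. (1/2)^(Suc i))"
    using orbit_small_off_quiet_exception[OF off_exceptions assms(1)] assms(3)
    by (intro sum_mono) auto
  also have "\<dots> \<le> (\<Sum>i\<in>{i0..<Q}. (1/2)^(Suc i))"
    by (intro sum_mono2) auto
  also have "\<dots> \<le> (1/2)^i0"
    by (rule sum_half_powers_le)
  finally show "pY n (T j s (subseries_partial I Q) - T j s (subseries_partial I i0)) \<le> (1/2)^i0" .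
qed

lemma orbit_subseries_partial_le:
  assumes "j \<in> J" "quiet_start (st i) \<le> s" "n \<le> i"
  shows "pY n (T j s (subseries_partial I i)) \<le> (1/2)^i"
proof -
  have "0 \<le> s"
    using assms(2) quiet_start_ge[of i] by linarith
  have "pY n (T j s (subseries_partial I i)) \<le> (\<Sum>i'\<in>I \<inter> {..<i}. pY n (T j s (u i')))"
    unfolding subseries_partial_def T_sum[OF assms(1) \<open>0 \<le> s\<close>] by (rule Y.seminorm_sum_le)
  also have "\<dots> \<le> real (card (I \<inter> {..<i})) * ((1/2)^i / (real i + 1))"
    using earlier_orbit_small assms by (intro sum_bounded_above) auto
  also have "\<dots> \<le> real i * ((1/2)^i / (real i + 1))"
    using card_mono[of "{..<i}" "I \<inter> {..<i}"] by (intro mult_right_mono) auto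
  also have "\<dots> = (real i / (real i + 1)) * (1/2)^i"
    by simp
  also have "\<dots> \<le> (1/2)^i"
    by (intro mult_left_le_one_le) auto
  finally show ?thesis .
qed

definition loud_set :: "nat \<Rightarrow> real set" where
  "loud_set i = B \<inter> {0..loud_end (st i)} - ({0..<loud_start (st i)} \<union> loud_exception i
     \<union> (\<Union>l. quiet_exception (l + Suc i) \<inter> {0..loud_end (st i)}))"

definition quiet_set :: "nat \<Rightarrow> real set" where
  "quiet_set i = {quiet_start (st i)..quiet_end (st i)} - (\<Union>l. quiet_exception (l + i) \<inter> {0..quiet_end (st i)})"

lemma loud_setD:
  assumes "s \<in> loud_set i"
  shows "s \<in> B \<inter> {loud_start (st i)..loud_end (st i)} - loud_exception i"
    and "\<And>i'. i < i' \<Longrightarrow> s \<notin> quiet_exception i'"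
proof -
  show "s \<in> B \<inter> {loud_start (st i)..loud_end (st i)} - loud_exception i"
    using assms by (auto simp: loud_set_def)
  fix i'
  assume "i < i'"
  have "s \<in> {0..loud_end (st i)}" "s \<notin> quiet_exception ((i' - Suc i) + Suc i) \<inter> {0..loud_end (st i)}"
    using assms unfolding loud_set_def by blast+
  then show "s \<notin> quiet_exception i'"
    using \<open>i < i'\<close> by simp
qed

lemma quiet_start_le_loud_set: "s \<in> loud_set i \<Longrightarrow> quiet_start (st i) \<le> s"
  using loud_setD(1) quiet_start_le_quiet_end[of i] quiet_end_le_loud_start[of i] by fastforce

lemma quiet_setD:
  assumes "s \<in> quiet_set i"
  shows "s \<in> {quiet_start (st i)..quiet_end (st i)}"
    and "\<And>i'. i \<le> i' \<Longrightarrow> s \<notin> quiet_exception i'"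
proof -
  show s: "s \<in> {quiet_start (st i)..quiet_end (st i)}"
    using assms by (auto simp: quiet_set_def)
  fix i'
  assume "i \<le> i'"
  have "0 \<le> s"
    using s quiet_start_ge[of i] by simp
  then have "s \<notin> quiet_exception ((i' - i) + i) \<inter> {0..quiet_end (st i)}"
    using assms s unfolding quiet_set_def by blast
  then show "s \<notin> quiet_exception i'"
    using \<open>i \<le> i'\<close> \<open>0 \<le> s\<close> s by simp
qed

lemma later_quiet_exceptions_lmeasurable:
  "(\<Union>l. quiet_exception (l + k) \<inter> {0..t}) \<in> lmeasurable"
  by (intro lmeasurable_if_subset_Icc[of _ 0 t] sets.countable_UN sets.Int)
    (auto simp: quiet_exception_def deviation_measurable)

lemma measure_later_quiet_exceptions:
  "measure lebesgue (\<Union>l. quiet_exception (l + Suc k) \<inter> {0..t}) \<le> (1/2)^k"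
proof (rule measure_UN_le_half_powers)
  fix l
  have "quiet_exception (l + Suc k) \<in> lmeasurable"
    unfolding quiet_exception_def by (rule lmeasurable_if_subset_Icc[OF deviation_subset deviation_measurable])
  then have "measure lebesgue (quiet_exception (l + Suc k) \<inter> {0..t}) \<le> measure lebesgue (quiet_exception (l + Suc k))"
    by (intro measure_mono_fmeasurable) (auto simp: quiet_exception_def deviation_measurable)
  also have "\<dots> \<le> (1/2)^(Suc (l + k))"
    using measure_quiet_exception[of "l + Suc k"] by simp
  finally show "measure lebesgue (quiet_exception (l + Suc k) \<inter> {0..t}) \<le> (1/2)^(Suc (l + k))" .
qed (auto simp: quiet_exception_def deviation_measurable)

lemma loud_set_lmeasurable: "loud_set i \<in> lmeasurable"
proof -
  have "(\<Union>l. quiet_exception (l + Suc i) \<inter> {0..loud_end (st i)}) \<in> sets lebesgue"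
    using later_quiet_exceptions_lmeasurable by (rule fmeasurableD)
  then show ?thesis
    unfolding loud_set_def using B_measurable
    by (intro lmeasurable_if_subset_Icc[of _ 0 "loud_end (st i)"] sets.Diff sets.Un)
      (auto simp: loud_exception_def deviation_measurable)
qed

lemma measure_loud_set_ge: "(1 - 2 / (real i + 1)) * loud_end (st i) \<le> measure lebesgue (loud_set i)"
proof -
  define U where "U = (\<Union>l. quiet_exception (l + Suc i) \<inter> {0..loud_end (st i)})"
  define C where "C = {0..<loud_start (st i)} \<union> loud_exception i \<union> U"
  have a: "0 \<le> loud_start (st i)"
    using quiet_start_ge[of i] quiet_start_le_quiet_end[of i] quiet_end_le_loud_start[of i] by linarith
  have U: "U \<in> lmeasurable" "measure lebesgue U \<le> 1"
    unfolding U_def by (rule later_quiet_exceptions_lmeasurable)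
      (rule order_trans[OF measure_later_quiet_exceptions], simp add: power_le_one)
  have E: "loud_exception i \<in> lmeasurable"
    unfolding loud_exception_def by (rule lmeasurable_if_subset_Icc[OF deviation_subset deviation_measurable])
  have "{0..<loud_start (st i)} \<in> lmeasurable"
    by (rule lmeasurable_if_subset_Icc[of _ 0 "loud_start (st i)"]) auto
  then have C: "C \<in> lmeasurable"
    unfolding C_def using U(1) E by (intro fmeasurable.Un)
  have "measure lebesgue C \<le> measure lebesgue ({0..<loud_start (st i)} \<union> loud_exception i) + measure lebesgue U"
    unfolding C_def using U(1) E by (intro measure_Un_le) (auto dest: fmeasurableD)
  also have "\<dots> \<le> loud_start (st i) + measure lebesgue (loud_exception i) + measure lebesgue U"
    using measure_Un_le[of "{0..<loud_start (st i)}" lebesgue "loud_exception i"] E a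
    by (auto dest: fmeasurableD)
  finally have measure_C: "measure lebesgue C \<le> loud_start (st i) + 2"
    using measure_loud_exception[of i] U(2) by linarith
  have B: "B \<inter> {0..loud_end (st i)} \<in> lmeasurable"
    by (rule lmeasurable_if_subset_Icc[OF _ B_measurable]) auto
  have "(1 - 2 / (real i + 1)) * loud_end (st i)
      \<le> (1 - 1 / (real i + 2)) * loud_end (st i) - (loud_start (st i) + 2)"
  proof -
    have b: "0 \<le> loud_end (st i)"
      using a loud_start_le_loud_end[of i] by linarith
    have "loud_start (st i) + 2 \<le> loud_end (st i) / (real i + 1)"
      using loud_end_ge[of i] by (simp add: field_simps)
    moreover have "loud_end (st i) / (real i + 2) \<le> loud_end (st i) / (real i + 1)"
      using b by (intro divide_left_mono) auto
    ultimately show ?thesis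
      by (simp add: algebra_simps)
  qed
  also have "\<dots> \<le> measure lebesgue (B \<inter> {0..loud_end (st i)}) - measure lebesgue C"
    using B_dense[of i] measure_C by linarith
  also have "\<dots> \<le> measure lebesgue (loud_set i)"
    using measure_Diff_ge[OF B C] by (simp add: loud_set_def C_def U_def)
  finally show ?thesis .
qed

lemma quiet_set_lmeasurable: "quiet_set i \<in> lmeasurable"
  unfolding quiet_set_def using later_quiet_exceptions_lmeasurable
  by (auto intro: fmeasurable_Diff dest: fmeasurableD)

lemma measure_quiet_set_ge:
  assumes "1 \<le> i"
  shows "(1 - 2 / (real i + 1)) * quiet_end (st i) \<le> measure lebesgue (quiet_set i)"
proof -
  define U where "U = (\<Union>l. quiet_exception (l + i) \<inter> {0..quiet_end (st i)})"
  obtain k where i: "i = Suc k"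
    using assms by (cases i) auto
  have U: "U \<in> lmeasurable" "measure lebesgue U \<le> 1"
    unfolding U_def i by (rule later_quiet_exceptions_lmeasurable)
      (rule order_trans[OF measure_later_quiet_exceptions], simp add: power_le_one)
  have "(1 - 2 / (real i + 1)) * quiet_end (st i) = quiet_end (st i) - 2 * quiet_start (st i)"
    using quiet_end_eq[of i] by (simp add: field_simps)
  also have "\<dots> \<le> quiet_end (st i) - quiet_start (st i) - 1"
    using quiet_start_ge[of i] by simp
  also have "\<dots> \<le> measure lebesgue {quiet_start (st i)..quiet_end (st i)} - measure lebesgue U"
    using quiet_start_le_quiet_end[of i] U(2) by simp
  also have "\<dots> \<le> measure lebesgue (quiet_set i)"
    using measure_Diff_ge[OF _ U(1), of "{quiet_start (st i)..quiet_end (st i)}"]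
    by (simp add: quiet_set_def U_def)
  finally show ?thesis .
qed

lemma orbit_subseries_small_on_quiet_set:
  assumes "s \<in> quiet_set i" "j \<in> J" "n \<le> i"
  shows "pY n (T j s (subseries I)) \<le> 2 * (1/2)^i"
proof -
  note s = quiet_setD[OF assms(1)]
  have "0 \<le> s"
    using s(1) quiet_start_ge[of i] by simp
  have "pY n (T j s (subseries I) - T j s (subseries_partial I i)) \<le> (1/2)^i"
  proof (rule orbit_subseries_tail_le[OF assms(2) \<open>0 \<le> s\<close> assms(3)])
    fix i'
    assume "i \<le> i'"
    then show "s \<in> {0..quiet_end (st i')} - quiet_exception i'"
      using s \<open>0 \<le> s\<close> quiet_end_mono[of i i'] by auto
  qed
  moreover have "pY n (T j s (subseries_partial I i)) \<le> (1/2)^i"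
    using orbit_subseries_partial_le[OF assms(2) _ assms(3)] s(1) by simp
  ultimately show ?thesis
    using Y.seminorm_add[of n "T j s (subseries I) - T j s (subseries_partial I i)" "T j s (subseries_partial I i)"]
    by simp
qed

lemma orbit_subseries_on_loud_set:
  assumes "s \<in> loud_set i" "j \<in> J" "m \<le> i"
  shows "i \<in> I \<Longrightarrow> real i - 1 \<le> pY m (T j s (subseries I))"
    and "i \<notin> I \<Longrightarrow> pY m (T j s (subseries I)) \<le> 2 * (1/2)^i"
proof -
  note s = loud_setD[OF assms(1)]
  have "0 \<le> s"
    using s(1) B_nonneg by auto
  have "quiet_start (st i) \<le> s"
    using s(1) quiet_start_le_quiet_end[of i] quiet_end_le_loud_start[of i] by auto
  define W where "W = T j s (subseries I)"
  define P where "P = T j s (subseries_partial I (Suc i))"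
  define R where "R = T j s (subseries_partial I i) + (W - P)"
  have tail: "pY m (W - P) \<le> (1/2)^(Suc i)"
    unfolding W_def P_def
  proof (rule orbit_subseries_tail_le[OF assms(2) \<open>0 \<le> s\<close>])
    show "m \<le> Suc i"
      using assms(3) by simp
    fix i'
    assume "Suc i \<le> i'"
    then show "s \<in> {0..quiet_end (st i')} - quiet_exception i'"
      using s \<open>0 \<le> s\<close> loud_end_le_later_quiet_start[of i i'] quiet_start_le_quiet_end[of i'] by auto
  qed
  have "pY m (T j s (subseries_partial I i)) \<le> (1/2)^i"
    by (rule orbit_subseries_partial_le[OF assms(2) \<open>quiet_start (st i) \<le> s\<close> assms(3)])
  moreover have "(1/2::real)^(Suc i) \<le> (1/2)^i"
    by simp
  ultimately have R: "pY m R \<le> 2 * (1/2)^i"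
    using Y.seminorm_add[of m "T j s (subseries_partial I i)" "W - P"] tail unfolding R_def by linarith
  have W: "W = T j s (if i \<in> I then u i else 0) + R"
    unfolding W_def P_def R_def subseries_partial_Suc T_add[OF assms(2) \<open>0 \<le> s\<close>] by simp
  show "real i - 1 \<le> pY m (T j s (subseries I))" if "i \<in> I"
  proof -
    have "pY m (T j s (u i)) - pY m R \<le> pY m W"
      using W that Y.seminorm_add_ge[of m "T j s (u i)" R] by simp
    moreover have "real i + 1 \<le> pY m (T j s (u i))"
      by (rule orbit_large_off_loud_exception[OF s(1) assms(2)])
    moreover have "(1/2::real)^i \<le> 1"
      by (simp add: power_le_one)
    ultimately show ?thesis
      using R unfolding W_def by linarith
  qed
  show "pY m (T j s (subseries I)) \<le> 2 * (1/2)^i" if "i \<notin> I"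
    using W that R T_zero[OF assms(2) \<open>0 \<le> s\<close>] unfolding W_def by simp
qed

section \<open>The dense subspace\<close>

lemma orbit_translated_subseries_on_loud_set:
  assumes "s \<in> loud_set i" "j \<in> J" "m \<le> i" "pY m (T j s y) \<le> 1"
  shows "i \<in> I \<Longrightarrow> real i - 2 \<le> pY m (T j s (y + subseries I))"
    and "i \<notin> I \<Longrightarrow> pY m (T j s (y + subseries I)) \<le> 3"
proof -
  have "0 \<le> s"
    using loud_setD(1)[OF assms(1)] B_nonneg by auto
  note T = T_add[OF assms(2) this, of y "subseries I"]
  show "real i - 2 \<le> pY m (T j s (y + subseries I))" if "i \<in> I"
    using orbit_subseries_on_loud_set(1)[OF assms(1-3) that] assms(4)
      Y.seminorm_add_ge[of m "T j s (subseries I)" "T j s y"]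
    unfolding T by (simp add: add.commute)
  have "(1/2::real)^i \<le> 1"
    by (simp add: power_le_one)
  then show "pY m (T j s (y + subseries I)) \<le> 3" if "i \<notin> I"
    using orbit_subseries_on_loud_set(2)[OF assms(1-3) that] assms(4)
      Y.seminorm_add[of m "T j s y" "T j s (subseries I)"]
    unfolding T by linarith
qed

lemma orbit_translated_subseries_on_quiet_set:
  assumes "s \<in> quiet_set i" "j \<in> J" "n \<le> i"
  shows "pY n (T j s (y + subseries I)) \<le> pY n (T j s y) + 2 * (1/2)^i"
proof -
  have "0 \<le> s"
    using quiet_setD(1)[OF assms(1)] quiet_start_ge[of i] by simp
  then show ?thesis
    using orbit_subseries_small_on_quiet_set[OF assms, of I] Y.seminorm_add[of n "T j s y" "T j s (subseries I)"]
    unfolding T_add[OF assms(2) \<open>0 \<le> s\<close>] by linarith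
qed

definition index_class :: "nat \<Rightarrow> nat set" where
  "index_class k = {i. fst (prod_decode i) = k}"

lemma index_class_unbounded: "\<exists>i\<ge>n. i \<in> index_class k"
  using le_prod_encode_2[of n k] by (intro exI[of _ "prod_encode (k, n)"]) (simp add: index_class_def)

lemma index_class_disjoint: "i \<in> index_class k \<Longrightarrow> i \<in> index_class k' \<Longrightarrow> k = k'"
  by (simp add: index_class_def)

lemma orbit_combination_large_on_loud_set:
  assumes K: "finite K" "k0 \<in> K" "r k0 \<noteq> 0" and y: "\<And>k. k \<in> K \<Longrightarrow> y k \<in> X0"
  shows "\<exists>i0. \<forall>i\<ge>i0. i \<in> index_class k0 \<longrightarrow> (\<forall>s\<in>loud_set i. \<forall>j\<in>J.
    1 \<le> pY m (T j s (\<Sum>k\<in>K. scX (r k) (y k + subseries (index_class k)))))"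
proof -
  define R where "R = (\<Sum>k\<in>K. norm (r k))"
  define \<rho> where "\<rho> = norm (r k0)"
  have "0 < \<rho>"
    using K(3) by (simp add: \<rho>_def)
  have "eventually (\<lambda>s. \<forall>u\<in>y ` K. \<forall>j\<in>J. pY m (T j s u) \<le> 1) at_top"
    using K(1) y by (intro eventually_orbits_le) auto
  then obtain s0 where s0: "\<And>s k j. s0 \<le> s \<Longrightarrow> k \<in> K \<Longrightarrow> j \<in> J \<Longrightarrow> pY m (T j s (y k)) \<le> 1"
    unfolding eventually_at_top_linorder by blast
  obtain i0 :: nat where i0: "max (real m) (max s0 ((3 * R + 1) / \<rho> + 2)) \<le> real i0"
    using real_arch_simple by blast
  have "1 \<le> pY m (T j s (\<Sum>k\<in>K. scX (r k) (y k + subseries (index_class k))))"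
    if i: "i0 \<le> i" "i \<in> index_class k0" and s: "s \<in> loud_set i" and j: "j \<in> J" for i s j
  proof -
    let ?x = "\<lambda>k. T j s (y k + subseries (index_class k))"
    have "real i + 1 \<le> s"
      using quiet_start_ge[of i] quiet_start_le_loud_set[OF s] by linarith
    then have "0 \<le> s" "s0 \<le> s" "m \<le> i"
      using i0 i(1) by linarith+
    note bounds = orbit_translated_subseries_on_loud_set[OF s j \<open>m \<le> i\<close> s0[OF \<open>s0 \<le> s\<close> _ j]]
    have "real i - 2 \<le> pY m (?x k0)"
      by (rule bounds(1)[OF K(2) i(2)])
    then have "\<rho> * (real i - 2) \<le> \<rho> * pY m (?x k0)"
      using \<open>0 < \<rho>\<close> by simp
    moreover have "(3 * R + 1) / \<rho> \<le> real i - 2"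
      using i0 i(1) by linarith
    then have "3 * R + 1 \<le> \<rho> * (real i - 2)"
      using \<open>0 < \<rho>\<close> by (simp add: pos_divide_le_eq mult.commute)
    moreover have "(\<Sum>k\<in>K - {k0}. norm (r k) * pY m (?x k)) \<le> 3 * R"
    proof -
      have "pY m (?x k) \<le> 3" if "k \<in> K - {k0}" for k
        using bounds(2) that i(2) index_class_disjoint by blast
      then have "(\<Sum>k\<in>K - {k0}. norm (r k) * pY m (?x k)) \<le> (\<Sum>k\<in>K - {k0}. norm (r k) * 3)"
        by (intro sum_mono mult_left_mono) auto
      also have "\<dots> = 3 * (\<Sum>k\<in>K - {k0}. norm (r k))"
        by (simp add: sum_distrib_left mult.commute)
      also have "\<dots> \<le> 3 * R"
        unfolding R_def using K(1) by (intro mult_left_mono sum_mono2) auto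
      finally show ?thesis .
    qed
    moreover have "\<rho> * pY m (?x k0) - (\<Sum>k\<in>K - {k0}. norm (r k) * pY m (?x k))
        \<le> pY m (T j s (\<Sum>k\<in>K. scX (r k) (y k + subseries (index_class k))))"
      unfolding orbit_combination[OF j \<open>0 \<le> s\<close>] \<rho>_def by (rule Y.seminorm_combination_ge[OF K(1,2)])
    ultimately show ?thesis
      by linarith
  qed
  then show ?thesis
    by blast
qed

lemma orbit_combination_small_on_quiet_set:
  assumes K: "finite K" and y: "\<And>k. k \<in> K \<Longrightarrow> y k \<in> X0" and "0 < \<eta>"
  shows "\<exists>i0. \<forall>i\<ge>i0. \<forall>s\<in>quiet_set i. \<forall>j\<in>J.
    pY n (T j s (\<Sum>k\<in>K. scX (r k) (y k + subseries (I k)))) < \<eta>"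
proof -
  define R where "R = (\<Sum>k\<in>K. norm (r k))"
  have "0 \<le> R"
    unfolding R_def by (simp add: sum_nonneg)
  define \<delta> where "\<delta> = \<eta> / (2 * (R + 1))"
  have "0 < \<delta>"
    unfolding \<delta>_def using \<open>0 < \<eta>\<close> \<open>0 \<le> R\<close> by simp
  have "eventually (\<lambda>s. \<forall>u\<in>y ` K. \<forall>j\<in>J. pY n (T j s u) \<le> \<delta>) at_top"
    using K y \<open>0 < \<delta>\<close> by (intro eventually_orbits_le) auto
  then obtain s1 where s1: "\<And>s k j. s1 \<le> s \<Longrightarrow> k \<in> K \<Longrightarrow> j \<in> J \<Longrightarrow> pY n (T j s (y k)) \<le> \<delta>"
    unfolding eventually_at_top_linorder by blast
  obtain i1 where i1: "(1/2::real)^i1 < \<delta>/2"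
    using real_arch_pow_inv[of "\<delta>/2" "1/2::real"] \<open>0 < \<delta>\<close> by auto
  obtain i0 :: nat where i0: "max (real n) (max s1 (real i1)) \<le> real i0"
    using real_arch_simple by blast
  have "pY n (T j s (\<Sum>k\<in>K. scX (r k) (y k + subseries (I k)))) < \<eta>"
    if i: "i0 \<le> i" and s: "s \<in> quiet_set i" and j: "j \<in> J" for i s j
  proof -
    have "real i + 1 \<le> s"
      using quiet_start_ge[of i] quiet_setD(1)[OF s] by auto
    then have "0 \<le> s" "s1 \<le> s" "n \<le> i" "i1 \<le> i"
      using i0 i by linarith+
    have "(1/2::real)^i \<le> (1/2)^i1"
      using \<open>i1 \<le> i\<close> by (simp add: power_decreasing)
    then have "pY n (T j s (y k + subseries (I k))) \<le> 2 * \<delta>" if "k \<in> K" for k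
      using orbit_translated_subseries_on_quiet_set[OF s j \<open>n \<le> i\<close>, of "y k" "I k"]
        s1[OF \<open>s1 \<le> s\<close> that j] i1 by linarith
    then have "pY n (T j s (\<Sum>k\<in>K. scX (r k) (y k + subseries (I k)))) \<le> (\<Sum>k\<in>K. norm (r k) * (2 * \<delta>))"
      unfolding orbit_combination[OF j \<open>0 \<le> s\<close>]
      by (intro order_trans[OF Y.seminorm_combination_le] sum_mono mult_left_mono) auto
    also have "\<dots> = \<eta> * (R / (R + 1))"
      unfolding R_def \<delta>_def sum_distrib_right[symmetric] using \<open>0 \<le> R\<close> by (simp add: R_def field_simps)
    also have "\<dots> < \<eta>"
      using \<open>0 < \<eta>\<close> \<open>0 \<le> R\<close> mult_strict_left_mono[of "R / (R + 1)" 1 \<eta>] by simp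
    finally show ?thesis .
  qed
  then show ?thesis
    by blast
qed

lemma upper_density_far_orbits:
  assumes K: "finite K" "k0 \<in> K" "r k0 \<noteq> 0" and y: "\<And>k. k \<in> K \<Longrightarrow> y k \<in> X0"
  defines "z \<equiv> \<Sum>k\<in>K. scX (r k) (y k + subseries (index_class k))"
  shows "upper_density (\<Inter>j\<in>J. {s. 0 \<le> s \<and> (1/2)^(Suc m) * sat 1 \<le> Y.dp (T j s z) 0}) = 1"
proof (rule upper_density_eq_1_if_large_subsets[OF orbit_dist_ge_set_measurable])
  fix i1
  have "\<exists>i0. \<forall>i\<ge>i0. i \<in> index_class k0 \<longrightarrow> (\<forall>s\<in>loud_set i. \<forall>j\<in>J. 1 \<le> pY m (T j s z))"
    unfolding z_def using K y by (rule orbit_combination_large_on_loud_set)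
  then obtain i0 where i0: "\<And>i s j. i0 \<le> i \<Longrightarrow> i \<in> index_class k0 \<Longrightarrow> s \<in> loud_set i \<Longrightarrow> j \<in> J \<Longrightarrow>
      1 \<le> pY m (T j s z)"
    by blast
  obtain i where i: "max i0 i1 \<le> i" "i \<in> index_class k0"
    using index_class_unbounded by blast
  have "real i \<le> loud_end (st i)"
    using quiet_start_ge[of i] quiet_start_le_loud_end[of i] by linarith
  moreover have "loud_set i \<subseteq> (\<Inter>j\<in>J. {s. 0 \<le> s \<and> (1/2)^(Suc m) * sat 1 \<le> Y.dp (T j s z) 0}) \<inter> {0..loud_end (st i)}"
  proof
    fix s
    assume s: "s \<in> loud_set i"
    have "0 \<le> s"
      using loud_setD(1)[OF s] B_nonneg by auto
    have "(1/2)^(Suc m) * sat 1 \<le> Y.dp (T j s z) 0" if "j \<in> J" for j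
    proof -
      have "sat 1 \<le> sat (pY m (T j s z))"
        using i0[of i s j] i s that by (intro sat_mono) auto
      then have "(1/2)^(Suc m) * sat 1 \<le> (1/2)^(Suc m) * sat (pY m (T j s z - 0))"
        by simp
      then show ?thesis
        using Y.seminorm_le_dp[of m "T j s z" 0] by linarith
    qed
    then show "s \<in> (\<Inter>j\<in>J. {s. 0 \<le> s \<and> (1/2)^(Suc m) * sat 1 \<le> Y.dp (T j s z) 0}) \<inter> {0..loud_end (st i)}"
      using \<open>0 \<le> s\<close> loud_setD(1)[OF s] by auto
  qed
  ultimately show "\<exists>i\<ge>i1. \<exists>t\<ge>real i. \<exists>G\<in>lmeasurable.
      G \<subseteq> (\<Inter>j\<in>J. {s. 0 \<le> s \<and> (1/2)^(Suc m) * sat 1 \<le> Y.dp (T j s z) 0}) \<inter> {0..t}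
      \<and> (1 - 2 / (real i + 1)) * t \<le> measure lebesgue G"
    using i loud_set_lmeasurable measure_loud_set_ge by (intro exI[of _ i] exI[of _ "loud_end (st i)"]) auto
qed

lemma upper_density_near_orbits:
  assumes K: "finite K" and y: "\<And>k. k \<in> K \<Longrightarrow> y k \<in> X0" and "0 < \<epsilon>"
  shows "upper_density (\<Inter>j\<in>J. {s. 0 \<le> s \<and> Y.dp (T j s (\<Sum>k\<in>K. scX (r k) (y k + subseries (I k)))) 0 < \<epsilon>}) = 1"
    (is "upper_density (\<Inter>j\<in>J. {s. 0 \<le> s \<and> Y.dp (T j s ?z) 0 < \<epsilon>}) = 1")
proof (rule upper_density_eq_1_if_large_subsets[OF orbit_dist_less_set_measurable])
  define z where "z = ?z"
  fix i1
  obtain L where L: "(1/2::real)^L < \<epsilon>/2"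
    using real_arch_pow_inv[of "\<epsilon>/2" "1/2::real"] \<open>0 < \<epsilon>\<close> by auto
  have "\<exists>i0. \<forall>i\<ge>i0. \<forall>s\<in>quiet_set i. \<forall>j\<in>J. pY L (T j s z) < \<epsilon>/2"
    unfolding z_def using K y half_gt_zero[OF \<open>0 < \<epsilon>\<close>] by (rule orbit_combination_small_on_quiet_set)
  then obtain i0 where i0: "\<And>i s j. i0 \<le> i \<Longrightarrow> s \<in> quiet_set i \<Longrightarrow> j \<in> J \<Longrightarrow> pY L (T j s z) < \<epsilon>/2"
    by blast
  define i where "i = max i0 (max i1 1)"
  have "real i \<le> quiet_end (st i)"
    using quiet_start_ge[of i] quiet_start_le_quiet_end[of i] by linarith
  moreover have "quiet_set i \<subseteq> (\<Inter>j\<in>J. {s. 0 \<le> s \<and> Y.dp (T j s z) 0 < \<epsilon>}) \<inter> {0..quiet_end (st i)}"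
  proof
    fix s
    assume s: "s \<in> quiet_set i"
    have "0 \<le> s"
      using quiet_setD(1)[OF s] quiet_start_ge[of i] by auto
    have "Y.dp (T j s z) 0 < \<epsilon>" if "j \<in> J" for j
    proof -
      have "(1/2::real)^(Suc L) \<le> (1/2)^L"
        by simp
      then show ?thesis
        using Y.dp_le_seminorm[of "T j s z" L] i0[of i s j] s that L unfolding i_def by linarith
    qed
    then show "s \<in> (\<Inter>j\<in>J. {s. 0 \<le> s \<and> Y.dp (T j s z) 0 < \<epsilon>}) \<inter> {0..quiet_end (st i)}"
      using \<open>0 \<le> s\<close> quiet_setD(1)[OF s] by auto
  qed
  moreover have "1 \<le> i" "i1 \<le> i"
    unfolding i_def by auto
  ultimately show "\<exists>i\<ge>i1. \<exists>t\<ge>real i. \<exists>G\<in>lmeasurable.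
      G \<subseteq> (\<Inter>j\<in>J. {s. 0 \<le> s \<and> Y.dp (T j s z) 0 < \<epsilon>}) \<inter> {0..t}
      \<and> (1 - 2 / (real i + 1)) * t \<le> measure lebesgue G"
    using quiet_set_lmeasurable measure_quiet_set_ge by (intro exI[of _ i] exI[of _ "quiet_end (st i)"]) auto
qed

lemma upper_density_far_and_near_in_span:
  assumes w: "range w \<subseteq> X0"
    and xy: "x \<in> X.span (range (\<lambda>k. w k + subseries (index_class k)))"
      "y \<in> X.span (range (\<lambda>k. w k + subseries (index_class k)))" "x \<noteq> y"
    and "0 < \<epsilon>"
  shows "upper_density (\<Inter>j\<in>J. {s. 0 \<le> s \<and> (1/2)^(Suc m) * sat 1 \<le> Y.dp (T j s x) (T j s y)}) = 1"
    and "upper_density (\<Inter>j\<in>J. {s. 0 \<le> s \<and> Y.dp (T j s x) (T j s y) < \<epsilon>}) = 1"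
proof -
  have "x - y \<in> X.span (range (\<lambda>k. w k + subseries (index_class k)))"
    using xy by (simp add: X.span_diff)
  then obtain K r where K: "finite K" and z: "x - y = (\<Sum>k\<in>K. scX (r k) (w k + subseries (index_class k)))"
    using X.span_range_explicit by blast
  have "\<exists>k0\<in>K. r k0 \<noteq> 0"
  proof (rule ccontr)
    assume "\<not> (\<exists>k0\<in>K. r k0 \<noteq> 0)"
    then have "x - y = 0"
      unfolding z by simp
    with \<open>x \<noteq> y\<close> show False
      by simp
  qed
  then obtain k0 where k0: "k0 \<in> K" "r k0 \<noteq> 0"
    by blast
  have w_X0: "\<And>k. k \<in> K \<Longrightarrow> w k \<in> X0"
    using w by auto
  show "upper_density (\<Inter>j\<in>J. {s. 0 \<le> s \<and> (1/2)^(Suc m) * sat 1 \<le> Y.dp (T j s x) (T j s y)}) = 1"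
    unfolding orbit_dist_set_eq[of "\<lambda>d. (1/2)^(Suc m) * sat 1 \<le> d" x y] z
    by (rule upper_density_far_orbits[of K k0 r w, OF K k0 w_X0])
  show "upper_density (\<Inter>j\<in>J. {s. 0 \<le> s \<and> Y.dp (T j s x) (T j s y) < \<epsilon>}) = 1"
    unfolding orbit_dist_set_eq[of "\<lambda>d. d < \<epsilon>" x y] z
    by (rule upper_density_near_orbits[of K w \<epsilon> r index_class, OF K w_X0 \<open>0 < \<epsilon>\<close>])
qed

lemma dense_subspace_far_and_near_orbits:
  assumes "separable_space X.dp.mtopology"
  shows "\<exists>S \<sigma>. X.subspace S \<and> X.dp.mtopology closure_of S = UNIV \<and> 0 < \<sigma> \<and>
     (\<forall>\<epsilon>>0. \<forall>x\<in>S. \<forall>y\<in>S. x \<noteq> y \<longrightarrow>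
        upper_density (\<Inter>j\<in>J. {s. 0 \<le> s \<and> \<sigma> \<le> Y.dp (T j s x) (T j s y)}) = 1 \<and>
        upper_density (\<Inter>j\<in>J. {s. 0 \<le> s \<and> Y.dp (T j s x) (T j s y) < \<epsilon>}) = 1)"
proof -
  obtain w where w: "range w \<subseteq> X0"
    and dense: "X.dp.mtopology closure_of X.span (range (\<lambda>k. w k + subseries (index_class k))) = UNIV"
    using X.exists_dense_span_of_translates[OF assms X0_dense, of "\<lambda>k. subseries (index_class k)"]
    by blast
  have "0 < (1/2::real)^(Suc m) * sat 1"
    by (simp add: sat_pos)
  then show ?thesis
    using dense upper_density_far_and_near_in_span[OF w]
    by (intro exI[of _ "X.span (range (\<lambda>k. w k + subseries (index_class k)))"]
        exI[of _ "(1/2::real)^(Suc m) * sat 1"]) (simp add: X.subspace_span)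
qed
end

lemma (in orbit_families) dense_subspace_far_and_near_orbits_if_divergent:
  assumes "separable_space X.dp.mtopology"
    and "\<exists>x m B. B \<subseteq> {0..} \<and> upper_density B = 1 \<and>
        (\<forall>j\<in>J. filterlim (\<lambda>t. pY m (T j t x)) at_top (inf at_top (principal B)))"
  shows "\<exists>S \<sigma>. X.subspace S \<and> X.dp.mtopology closure_of S = UNIV \<and> 0 < \<sigma> \<and>
     (\<forall>\<epsilon>>0. \<forall>x\<in>S. \<forall>y\<in>S. x \<noteq> y \<longrightarrow>
        upper_density (\<Inter>j\<in>J. {s. 0 \<le> s \<and> \<sigma> \<le> Y.dp (T j s x) (T j s y)}) = 1 \<and>
        upper_density (\<Inter>j\<in>J. {s. 0 \<le> s \<and> Y.dp (T j s x) (T j s y) < \<epsilon>}) = 1)"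
proof -
  obtain x\<^sub>b m B where B: "B \<subseteq> {0..}" "upper_density B = 1"
    "\<And>j. j \<in> J \<Longrightarrow> filterlim (\<lambda>t. pY m (T j t x\<^sub>b)) at_top (inf at_top (principal B))"
    using assms(2) by blast
  have "x\<^sub>b \<in> X.dp.mtopology closure_of X0"
    using X0_dense by simp
  then obtain v where v: "range v \<subseteq> X0" "limitin X.dp.mtopology v x\<^sub>b sequentially"
    unfolding X.dp.closure_of_sequentially by auto
  have divergent: "divergent_orbit scX p scY pY J X0 T x\<^sub>b m B v"
    by (rule divergent_orbit.intro[OF orbit_families_axioms divergent_orbit_axioms.intro])
      (use B v in auto)
  then interpret divergent_orbit scX p scY pY J X0 T x\<^sub>b m B v .
  obtain F st where stages: "\<And>i. admissible_stage i (F i) (st i)"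
    "\<And>i. F (Suc i) = insert (stage_vector (st i)) (F i)" "\<And>i. loud_end (st i) + 1 \<le> quiet_start (st (Suc i))"
    using exists_stage_sequence by blast
  interpret stage_sequence scX p scY pY J X0 T x\<^sub>b m B v F st
    by (rule stage_sequence.intro[OF divergent stage_sequence_axioms.intro]) (fact stages)+
  show ?thesis
    by (rule dense_subspace_far_and_near_orbits[OF assms(1)])
qed

theorem theorem2p3:
  fixes scX :: "'k::real_normed_field \<Rightarrow> 'x::ab_group_add \<Rightarrow> 'x"
    and scY :: "'k \<Rightarrow> 'y::ab_group_add \<Rightarrow> 'y"
    and p :: "nat \<Rightarrow> 'x \<Rightarrow> real"
    and pY :: "nat \<Rightarrow> 'y \<Rightarrow> real"
    and N :: nat
    and X0 :: "'x set"
    and T :: "nat \<Rightarrow> real \<Rightarrow> 'x \<Rightarrow> 'y"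
  assumes field_R_or_C:
      "(\<forall>z::'k. z \<in> range of_real) \<or>
       (\<exists>i::'k. i * i = -1 \<and> (\<forall>z::'k. \<exists>a b. z = of_real a + of_real b * i))"
    and X_frechet: "frechet_space scX p"
    and Y_frechet: "frechet_space scY pY"
    and X_separable: "separable_space (seminorm_topology p)"
    and Y_separable: "separable_space (seminorm_topology pY)"
    and X_nontrivial: "\<exists>x::'x. x \<noteq> 0"
    and Y_nontrivial: "\<exists>y::'y. y \<noteq> 0"
    and N_ge: "N \<ge> 2"
    and X0_subspace: "module.subspace scX X0"
    and X0_dense: "(seminorm_topology p) closure_of X0 = UNIV"
    and T_linear: "\<And>j t. j \<in> {1..N} \<Longrightarrow> t \<ge> 0 \<Longrightarrow> Vector_Spaces.linear scX scY (T j t)"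
    and T_cont: "\<And>j t. j \<in> {1..N} \<Longrightarrow> t \<ge> 0 \<Longrightarrow>
        continuous_map (seminorm_topology p) (seminorm_topology pY) (T j t)"
    and T_strong: "\<And>j x. j \<in> {1..N} \<Longrightarrow>
        continuous_map (top_of_set {0..}) (seminorm_topology pY) (\<lambda>t. T j t x)"
    and cond_a: "\<And>j x. j \<in> {1..N} \<Longrightarrow> x \<in> X0 \<Longrightarrow>
        limitin (seminorm_topology pY) (\<lambda>t. T j t x) 0 at_top"
    and cond_b: "\<exists>x m B. B \<subseteq> {0..} \<and> upper_density B = 1 \<and>
        (\<forall>j\<in>{1..N}. filterlim (\<lambda>t. pY m (T j t x)) at_top (inf at_top (principal B)))"
  shows "\<exists>S \<sigma>. module.subspace scX S \<and> (seminorm_topology p) closure_of S = UNIV \<and> \<sigma> > 0 \<and>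
     (\<forall>\<epsilon>>0. \<forall>x\<in>S. \<forall>y\<in>S. x \<noteq> y \<longrightarrow>
        upper_density (\<Inter>j\<in>{1..N}. {s. s \<ge> 0 \<and> seminorm_metric pY (T j s x) (T j s y) \<ge> \<sigma>}) = 1 \<and>
        upper_density (\<Inter>j\<in>{1..N}. {s. s \<ge> 0 \<and> seminorm_metric pY (T j s x) (T j s y) < \<epsilon>}) = 1)"
proof -
  interpret orbit_families scX p scY pY "{1..N}" X0 T
    by (intro orbit_families.intro orbit_families_axioms.intro frechet_seminorms.intro)
      (fact X_frechet Y_frechet finite_atLeastAtMost X0_subspace X0_dense T_linear T_cont T_strong cond_a)+
  show ?thesis
    by (rule dense_subspace_far_and_near_orbits_if_divergent[OF X_separable cond_b])
qed

end
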